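(* Assume that the super Poincaré inequality $$\mu(f^2)\le r\,\mathcal E(f)+\beta(r)\,\mu(|f|)^2,\qquad r>0,\ f\in\mathcal D(\mathcal E),$$ holds for some decreasing function $\beta:(0,\infty)\to(0,\infty)$. Suppose there exists a constant $\kappa_1>0$ such that $\kappa_2:=\mu(e^{-2V})<\infty$ and $$|V(x)-V(y)|\le\kappa_1\big(1\wedge d(x,y)\big)\quad\text{for all }(x,y)\text{ with }q(x,y)>0.$$ Then $$\mu_V(f^2)\le s\,\mathcal E_V(f)+\beta_V(s)\,\mu_V(|f|)^2,\qquad s>0,\ f\in\mathcal D(\mathcal E_V),$$ holds with $$\beta_V(s):=\inf\Big\{16\kappa_2\beta(r)^3(4+\lambda\kappa_1^2s'):\ s'\in(0,s],\ 0<r\le\frac{s'e^{-\kappa_1}}{4+\lambda\kappa_1^2s'}\Big\},\qquad s>0.$$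
   Context: Setting: $(E,d)$ is a Polish space with Borel $\sigma$-field and a probability measure $\mu$. Let $q:E\times E\to[0,\infty)$ be measurable with $q(x,x)=0$ for all $x$, and $\lambda:=\sup_{x\in E}\int_E(1\wedge d(x,y)^2)q(x,y)\,\mu(\mathrm dy)<\infty.$ For bounded measurable $f,g$ set $\Gamma(f,g)(x)=\int_E(f(x)-f(y))(g(x)-g(y))q(x,y)\mu(\mathrm dy)$; $\mathcal A$ is the set of bounded measurable $f$ with $\Gamma(f,f)$ bounded, assumed dense in $L^2(\mu)$. $(\mathcal E,\mathcal D(\mathcal E))$ is the closure in $L^2(\mu)$ of $\mathcal E(f,g)=\mu(\Gamma(f,g))$ on $\mathcal A$, $\mathcal E(f)=\mathcal E(f,f)$. Fix $o\in E$, $\rho(x)=d(o,x)$. $V$ is a measurable function bounded on each set $\{\rho\le r\}$, $r>0$, with $\mu(e^V)=1$; $\mu_V(\mathrm dx)=e^{V(x)}\mu(\mathrm dx)$, and $(\mathcal E_V,\mathcal D(\mathcal E_V))$ is the closure in $L^2(\mu_V)$ of $\mathcal E_V(f,g)=\mu_V(\Gamma(f,g))$ on $\mathcal A$, $\mathcal E_V(f)=\mathcal E_V(f,f)$. *)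

theory Defs
  imports "HOL-Probability.Probability"
begin

text \<open>The reference measure mu is fixed; the form is built on the class A
  (bounded measurable f with Gamma(f,f) bounded) and closed in L2(M),
  where M is either mu or mu_V.\<close>

definition jump_lambda :: "'a::metric_space measure \<Rightarrow> ('a \<Rightarrow> 'a \<Rightarrow> real) \<Rightarrow> real" where
  "jump_lambda \<mu> q =
     (SUP x. enn2real (\<integral>\<^sup>+ y. ennreal (min 1 ((dist x y)\<^sup>2) * q x y) \<partial>\<mu>))"

definition Gamma :: "'a measure \<Rightarrow> ('a \<Rightarrow> 'a \<Rightarrow> real) \<Rightarrow> ('a \<Rightarrow> real) \<Rightarrow> ('a \<Rightarrow> real) \<Rightarrow> 'a \<Rightarrow> real" where
  "Gamma \<mu> q f g x = (\<integral> y. (f x - f y) * (g x - g y) * q x y \<partial>\<mu>)"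

definition algA :: "'a measure \<Rightarrow> ('a \<Rightarrow> 'a \<Rightarrow> real) \<Rightarrow> ('a \<Rightarrow> real) set" where
  "algA \<mu> q = {f. f \<in> borel_measurable \<mu> \<and> (\<exists>C. \<forall>x. \<bar>f x\<bar> \<le> C) \<and>
      (\<exists>C::real. \<forall>x. (\<integral>\<^sup>+ y. ennreal ((f x - f y)\<^sup>2 * q x y) \<partial>\<mu>) \<le> ennreal C)}"

definition energy :: "'a measure \<Rightarrow> ('a \<Rightarrow> 'a \<Rightarrow> real) \<Rightarrow> 'a measure \<Rightarrow> ('a \<Rightarrow> real) \<Rightarrow> real" where
  "energy \<mu> q M f = (\<integral> x. Gamma \<mu> q f f x \<partial>M)"

definition approx_seq :: "'a measure \<Rightarrow> ('a \<Rightarrow> 'a \<Rightarrow> real) \<Rightarrow> 'a measure \<Rightarrow> (nat \<Rightarrow> 'a \<Rightarrow> real) \<Rightarrow> ('a \<Rightarrow> real) \<Rightarrow> bool" where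
  "approx_seq \<mu> q M fn f \<longleftrightarrow>
     (\<forall>n. fn n \<in> algA \<mu> q) \<and>
     ((\<lambda>n. \<integral> x. (fn n x - f x)\<^sup>2 \<partial>M) \<longlonglongrightarrow> 0) \<and>
     (\<forall>\<epsilon>>0. \<exists>N. \<forall>m\<ge>N. \<forall>n\<ge>N. energy \<mu> q M (\<lambda>x. fn n x - fn m x) < \<epsilon>)"

text \<open>Domain of the closure (as a set of representatives of L2(M) classes).\<close>
definition form_dom :: "'a measure \<Rightarrow> ('a \<Rightarrow> 'a \<Rightarrow> real) \<Rightarrow> 'a measure \<Rightarrow> ('a \<Rightarrow> real) set" where
  "form_dom \<mu> q M = {f. f \<in> borel_measurable M \<and> integrable M (\<lambda>x. (f x)\<^sup>2) \<and>
       (\<exists>fn. approx_seq \<mu> q M fn f)}"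

text \<open>Value of the closed form: the limit of energy along an approximating sequence
  (independent of the sequence since the form is closable).\<close>
definition form_val :: "'a measure \<Rightarrow> ('a \<Rightarrow> 'a \<Rightarrow> real) \<Rightarrow> 'a measure \<Rightarrow> ('a \<Rightarrow> real) \<Rightarrow> real" where
  "form_val \<mu> q M f = (SOME e. \<exists>fn. approx_seq \<mu> q M fn f \<and> ((\<lambda>n. energy \<mu> q M (fn n)) \<longlonglongrightarrow> e))"

end

theory Submission
  imports Defs
begin

text \<open>
  For \<open>h \<in> A\<close> apply the super Poincar\'e inequality for \<open>\<mu>\<close> to \<open>h e\<^sup>V\<^sup>/\<^sup>2\<close> (with \<open>V\<close>
  truncated, so that the function stays in \<open>A\<close>). Since \<open>V\<close> varies by at most \<open>\<kappa>\<^sub>1 (1 \<and> d)\<close>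
  along jumps, \<open>\<Gamma>(h e\<^sup>V\<^sup>/\<^sup>2) \<le> e\<^sup>\<kappa>\<^sup>1 e\<^sup>V (2 \<Gamma>(h) + \<lambda> \<kappa>\<^sub>1\<^sup>2 h\<^sup>2 / 2)\<close>, whence
  \<open>\<mu>\<^sub>V(h\<^sup>2) \<le> r e\<^sup>\<kappa>\<^sup>1 (2 \<E>\<^sub>V(h) + \<lambda> \<kappa>\<^sub>1\<^sup>2 \<mu>\<^sub>V(h\<^sup>2) / 2) + \<beta>(r) \<mu>(|h| e\<^sup>V\<^sup>/\<^sup>2)\<^sup>2\<close>.
  For \<open>r\<close> as in the definition of \<open>\<beta>\<^sub>V\<close> the zero-order term is absorbed into the left-hand
  side. By Cauchy-Schwarz, \<open>\<mu>(|h| e\<^sup>V\<^sup>/\<^sup>2)\<^sup>2 \<le> \<mu>\<^sub>V(|h|) \<mu>(|h|)\<close> and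
  \<open>\<mu>(|h|)\<^sup>2 \<le> \<mu>\<^sub>V(h\<^sup>2) \<mu>(e\<^sup>-\<^sup>V)\<close>, and AM-GM turns the last term into
  \<open>\<mu>\<^sub>V(h\<^sup>2)/2\<close> plus a multiple of \<open>\<mu>\<^sub>V(|h|)\<^sup>2\<close>.

  The inequality passes from \<open>A\<close> to the closed form by \<open>L\<^sup>2\<close>-approximation. Applying the
  hypothesis to \<open>h e\<^sup>V\<^sup>/\<^sup>2 \<in> A\<close> needs that the closed form of \<open>\<mu>\<close> agrees with the
  pre-form on \<open>A\<close>; this follows from Fatou's lemma along an a.e. convergent subsequence,
  using that \<open>\<E>\<^sup>1\<^sup>/\<^sup>2\<close> is a seminorm.
\<close>

section \<open>Elementary inequalities\<close>

lemma square_add_le_weighted: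
  fixes a b t :: real
  assumes "t > 0"
  shows "(a + b)\<^sup>2 \<le> (1 + t) * a\<^sup>2 + (1 + 1/t) * b\<^sup>2"
proof -
  have "(1 + t) * a\<^sup>2 + (1 + 1/t) * b\<^sup>2 - (a + b)\<^sup>2 = (t * a - b)\<^sup>2 / t"
    using assms by (simp add: field_simps power2_eq_square)
  also have "\<dots> \<ge> 0" using assms by simp
  finally show ?thesis by simp
qed

lemma square_add_le: "((a::real) + b)\<^sup>2 \<le> 2 * a\<^sup>2 + 2 * b\<^sup>2"
  using square_add_le_weighted[of 1 a b] by simp

lemma le_of_forall_le_one_plus_mult:
  fixes a b :: real
  assumes "\<And>t. t > 0 \<Longrightarrow> a \<le> (1 + t) * b" and "0 \<le> b"
  shows "a \<le> b"
proof (rule field_le_epsilon)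
  fix e :: real assume "e > 0"
  then have "a \<le> (1 + e / (b + 1)) * b" using assms by simp
  also have "\<dots> \<le> b + e"
    using \<open>e > 0\<close> \<open>0 \<le> b\<close> by (simp add: field_simps)
  finally show "a \<le> b + e" .
qed

lemma sqrt_le_sqrt_add_of_weighted_bound:
  fixes A B C :: real
  assumes bound: "\<And>t. t > 0 \<Longrightarrow> A \<le> (1 + t) * B + (1 + 1/t) * C" and "0 \<le> B" "0 \<le> C"
  shows "sqrt A \<le> sqrt B + sqrt C"
proof (cases "B = 0 \<or> C = 0")
  case degenerate: True
  have "A \<le> B + C"
  proof (cases "B = 0")
    case True
    have "A \<le> (1 + s) * C" if "s > 0" for s using bound[of "1/s"] that True by simp
    then have "A \<le> C" using \<open>0 \<le> C\<close> by (rule le_of_forall_le_one_plus_mult)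
    then show ?thesis using True by simp
  next
    case False
    with degenerate have "C = 0" by simp
    have "A \<le> (1 + t) * B" if "t > 0" for t using bound[OF that] \<open>C = 0\<close> by simp
    then have "A \<le> B" using \<open>0 \<le> B\<close> by (rule le_of_forall_le_one_plus_mult)
    then show ?thesis using \<open>C = 0\<close> by simp
  qed
  then have "sqrt A \<le> sqrt (B + C)" by simp
  also have "\<dots> = sqrt B + sqrt C" using degenerate by auto
  finally show ?thesis .
next
  case False
  define b c where "b = sqrt B" and "c = sqrt C"
  have b: "b > 0" and c: "c > 0" using False assms(2,3) by (auto simp: b_def c_def)
  have B: "B = b\<^sup>2" and C: "C = c\<^sup>2" using assms(2,3) by (simp_all add: b_def c_def)
  have "(1 + c / b) * b\<^sup>2 + (1 + 1 / (c / b)) * c\<^sup>2 = (b + c)\<^sup>2"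
    using b c by (simp add: field_simps power2_eq_square)
  then have "A \<le> (b + c)\<^sup>2" using bound[of "c / b"] b c unfolding B C by simp
  then show ?thesis using b c unfolding b_def c_def by (intro real_le_lsqrt) auto
qed

lemma power2_min_one:
  fixes d :: real
  assumes "0 \<le> d"
  shows "(min 1 d)\<^sup>2 = min 1 (d\<^sup>2)"
proof (cases "d \<le> 1")
  case True
  then show ?thesis using assms by (simp add: power_le_one)
next
  case False
  then show ?thesis by (simp add: one_le_power)
qed

lemma abs_one_minus_exp_le: "\<bar>1 - exp (w::real)\<bar> \<le> \<bar>w\<bar> * exp \<bar>w\<bar>"
proof (cases "w \<ge> 0")
  case True
  have "exp w * (1 - w) \<le> exp w * exp (- w)"
    using exp_ge_add_one_self[of "-w"] by (intro mult_left_mono) auto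
  then show ?thesis using True by (simp add: algebra_simps exp_minus_inverse)
next
  case False
  have "(-w) * 1 \<le> (-w) * exp (-w)" using False by (intro mult_left_mono) auto
  moreover have "\<bar>1 - exp w\<bar> = 1 - exp w" "\<bar>w\<bar> * exp \<bar>w\<bar> = (-w) * exp (-w)" using False by auto
  ultimately show ?thesis using exp_ge_add_one_self[of w] by linarith
qed

lemma exp_half_diff_square_le:
  fixes a b u :: real
  assumes "\<bar>a - b\<bar> \<le> u"
  shows "(exp (a / 2) - exp (b / 2))\<^sup>2 \<le> exp a * (exp u * (u / 2)\<^sup>2)"
proof -
  define w where "w = (b - a) / 2"
  have w: "\<bar>w\<bar> \<le> u / 2" using assms by (simp add: w_def abs_minus_commute)
  have "exp (b / 2) = exp (a / 2) * exp w" by (simp add: w_def diff_divide_distrib flip: exp_add)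
  then have "(exp (a / 2) - exp (b / 2))\<^sup>2 = (exp (a / 2))\<^sup>2 * (1 - exp w)\<^sup>2"
    by (simp add: power2_eq_square algebra_simps)
  also have "(exp (a / 2))\<^sup>2 = exp a" by (simp add: exp_double[symmetric])
  also have "(1 - exp w)\<^sup>2 \<le> (\<bar>w\<bar> * exp \<bar>w\<bar>)\<^sup>2"
    using abs_one_minus_exp_le[of w] by (metis abs_ge_zero power2_abs power_mono)
  also have "\<dots> = w\<^sup>2 * exp (2 * \<bar>w\<bar>)" by (simp add: power_mult_distrib exp_double)
  also have "\<dots> \<le> (u / 2)\<^sup>2 * exp u"
    using w by (intro mult_mono) (auto simp: abs_le_square_iff[symmetric])
  finally show ?thesis by (simp add: mult_left_mono mult.commute)
qed

lemma weighted_am_gm: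
  fixes a b p m k \<beta> :: real
  assumes "m\<^sup>2 \<le> b * p" "p\<^sup>2 \<le> a * k" "0 \<le> a" "0 \<le> b" "0 \<le> k" "0 \<le> \<beta>"
  shows "2 * \<beta> * m\<^sup>2 \<le> a + \<beta>\<^sup>2 * b\<^sup>2 * k"
proof -
  define Z where "Z = \<beta>\<^sup>2 * b\<^sup>2 * k"
  have "(2 * \<beta> * (b * p))\<^sup>2 = 4 * (\<beta>\<^sup>2 * b\<^sup>2) * p\<^sup>2" by (simp add: power2_eq_square)
  also have "\<dots> \<le> 4 * (\<beta>\<^sup>2 * b\<^sup>2) * (a * k)" using assms(2) by (intro mult_left_mono) auto
  also have "\<dots> \<le> (a + Z)\<^sup>2"
    using sum_squares_ge_zero[of 0 "a - Z"] by (simp add: Z_def power2_eq_square algebra_simps)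
  finally have "2 * \<beta> * (b * p) \<le> a + Z"
    by (rule power2_le_imp_le) (use assms in \<open>simp add: Z_def\<close>)
  moreover have "2 * \<beta> * m\<^sup>2 \<le> 2 * \<beta> * (b * p)" using assms by (intro mult_left_mono) auto
  ultimately show ?thesis unfolding Z_def by linarith
qed

text \<open>Absorbing the zero-order part of the energy bound into the left-hand side:
  the constraint on \<open>r\<close> makes \<open>r K L\<close> at most \<open>L s' / (4 + L s') < 1\<close>.\<close>
lemma absorb_zero_order_term:
  fixes a e L r K s s' Z \<beta> m :: real
  assumes "0 \<le> e" "0 \<le> L" "0 < r" "0 < K" "0 < s'" "s' \<le> s" "0 \<le> Z"
    and r_le: "r * K * (4 + L * s') \<le> s'"
    and main: "a \<le> r * (2 * K * e + K * L / 2 * a) + \<beta> * m\<^sup>2"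
    and am_gm: "2 * \<beta> * m\<^sup>2 \<le> a + Z"
  shows "a \<le> s * e + Z * (4 + L * s') / 4"
proof -
  define y where "y = r * K * L"
  have four_le: "4 \<le> (1 - y) * (4 + L * s')"
    using mult_left_mono[OF r_le \<open>0 \<le> L\<close>] by (simp add: y_def algebra_simps)
  have y: "0 < 1 - y"
    using four_le \<open>0 \<le> L\<close> \<open>0 < s'\<close> by (smt (verit) mult_nonpos_nonneg zero_le_mult_iff)
  have "4 * (r * K) * e \<le> s' * (1 - y) * e"
    using r_le \<open>0 \<le> e\<close> by (intro mult_right_mono) (auto simp: y_def algebra_simps)
  then have "(1 - y) * a \<le> (1 - y) * (s' * e) + Z"
    using main am_gm by (simp add: y_def algebra_simps)
  then have "a \<le> s' * e + Z / (1 - y)"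
    using y by (simp add: field_simps)
  also have "Z / (1 - y) = Z * (1 / (1 - y))" by simp
  also have "\<dots> \<le> Z * ((4 + L * s') / 4)"
    using four_le y \<open>0 \<le> Z\<close> by (intro mult_left_mono) (simp_all add: field_simps)
  also have "s' * e \<le> s * e" using assms by (intro mult_right_mono)
  finally show ?thesis by simp
qed

lemma absorbed_constant_le:
  fixes \<beta> k \<kappa> b D :: real
  assumes "1 \<le> \<beta>" "1 \<le> k" "k\<^sup>2 \<le> \<kappa>" "0 \<le> D"
  shows "\<beta>\<^sup>2 * b\<^sup>2 * k * D / 4 \<le> 16 * \<kappa> * \<beta> ^ 3 * D * b\<^sup>2"
proof -
  have "k \<le> \<kappa>" using power_increasing[of 1 2 k] assms(2,3) by simp
  moreover have "\<beta>\<^sup>2 \<le> \<beta> ^ 3" using power_increasing[of 2 3 \<beta>] assms(1) by simp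
  ultimately have "\<beta>\<^sup>2 * k \<le> \<beta> ^ 3 * \<kappa>" using assms(1,2) by (intro mult_mono) auto
  then have "\<beta>\<^sup>2 * k * (b\<^sup>2 * D) \<le> \<beta> ^ 3 * \<kappa> * (b\<^sup>2 * D)" using assms(4) by (intro mult_right_mono) auto
  moreover have "0 \<le> \<beta> ^ 3 * \<kappa> * (b\<^sup>2 * D)" using \<open>k \<le> \<kappa>\<close> assms by simp
  moreover have "\<beta>\<^sup>2 * b\<^sup>2 * k * D = \<beta>\<^sup>2 * k * (b\<^sup>2 * D)"
    "16 * \<kappa> * \<beta> ^ 3 * D * b\<^sup>2 = 16 * (\<beta> ^ 3 * \<kappa> * (b\<^sup>2 * D))"
    by (simp_all only: mult_ac)
  ultimately show ?thesis by linarith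
qed

section \<open>Cauchy-Schwarz and \<open>L\<^sup>2\<close>-convergence\<close>

lemma integrable_sqrt_mult:
  fixes F G :: "'a \<Rightarrow> real"
  assumes "integrable M F" "integrable M G" "\<And>x. 0 \<le> F x" "\<And>x. 0 \<le> G x"
  shows "integrable M (\<lambda>x. sqrt (F x) * sqrt (G x))"
proof (rule Bochner_Integration.integrable_bound[OF Bochner_Integration.integrable_add[OF assms(1,2)]])
  have "sqrt (F x) * sqrt (G x) \<le> F x + G x" for x
    using arith_geo_mean_sqrt[OF assms(3,4), of x x] assms(3,4)[of x] by (simp add: real_sqrt_mult)
  then show "AE x in M. norm (sqrt (F x) * sqrt (G x)) \<le> norm (F x + G x)"
    using assms(3,4) by simp
qed (use assms in auto)

lemma Cauchy_Schwarz_integral_sqrt: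
  fixes F G :: "'a \<Rightarrow> real"
  assumes F: "integrable M F" "\<And>x. 0 \<le> F x" and G: "integrable M G" "\<And>x. 0 \<le> G x"
  shows "(\<integral>x. sqrt (F x) * sqrt (G x) \<partial>M)\<^sup>2 \<le> (\<integral>x. F x \<partial>M) * (\<integral>x. G x \<partial>M)"
proof -
  have nn: "ennreal (\<integral>x. H x \<partial>M) = (\<integral>\<^sup>+x. ennreal (sqrt (H x)) ^ 2 \<partial>M)"
    if "integrable M H" "\<And>x. 0 \<le> H x" for H :: "'a \<Rightarrow> real"
    using that by (subst nn_integral_eq_integral[symmetric])
      (auto intro!: nn_integral_cong simp: ennreal_power)
  have "ennreal (\<integral>x. sqrt (F x) * sqrt (G x) \<partial>M) = (\<integral>\<^sup>+x. ennreal (sqrt (F x)) * ennreal (sqrt (G x)) \<partial>M)"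
    using integrable_sqrt_mult[OF F(1) G(1) F(2) G(2)] F G
    by (subst nn_integral_eq_integral[symmetric]) (auto intro!: nn_integral_cong simp: ennreal_mult)
  moreover have "(\<lambda>x. ennreal (sqrt (H x))) \<in> borel_measurable M" if "integrable M H" for H
    by (intro measurable_compose[OF _ measurable_ennreal] measurable_compose[OF _ borel_measurable_sqrt]
        borel_measurable_integrable that)
  then have "(\<integral>\<^sup>+x. ennreal (sqrt (F x)) * ennreal (sqrt (G x)) \<partial>M)\<^sup>2
      \<le> (\<integral>\<^sup>+x. ennreal (sqrt (F x)) ^ 2 \<partial>M) * (\<integral>\<^sup>+x. ennreal (sqrt (G x)) ^ 2 \<partial>M)"
    using F(1) G(1) by (intro Cauchy_Schwarz_nn_integral)
  ultimately have "(ennreal (\<integral>x. sqrt (F x) * sqrt (G x) \<partial>M))\<^sup>2 \<le> ennreal (\<integral>x. F x \<partial>M) * ennreal (\<integral>x. G x \<partial>M)"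
    unfolding nn[OF F] nn[OF G] by simp
  moreover have "0 \<le> (\<integral>x. sqrt (F x) * sqrt (G x) \<partial>M)" "0 \<le> (\<integral>x. F x \<partial>M)" "0 \<le> (\<integral>x. G x \<partial>M)"
    using F G by (auto intro!: integral_nonneg_AE)
  ultimately show ?thesis by (simp add: ennreal_power ennreal_mult[symmetric])
qed

lemma integrable_mult_bounded:
  fixes f g :: "'a \<Rightarrow> real"
  assumes "integrable M f" "g \<in> borel_measurable M" "\<And>x. \<bar>g x\<bar> \<le> C"
  shows "integrable M (\<lambda>x. f x * g x)"
proof (rule Bochner_Integration.integrable_bound[of M "\<lambda>x. C * f x"])
  have "\<bar>f x\<bar> * \<bar>g x\<bar> \<le> \<bar>f x\<bar> * \<bar>C\<bar>" for x
    using assms(3)[of x] by (intro mult_left_mono) auto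
  then show "AE x in M. norm (f x * g x) \<le> norm (C * f x)"
    by (simp add: abs_mult mult.commute)
qed (use assms in auto)

lemma integrable_square_diff:
  fixes f g :: "'a \<Rightarrow> real"
  assumes "integrable M (\<lambda>x. (f x)\<^sup>2)" "integrable M (\<lambda>x. (g x)\<^sup>2)"
    "f \<in> borel_measurable M" "g \<in> borel_measurable M"
  shows "integrable M (\<lambda>x. (f x - g x)\<^sup>2)"
proof (rule Bochner_Integration.integrable_bound[of M "\<lambda>x. 2 * (f x)\<^sup>2 + 2 * (g x)\<^sup>2"])
  show "AE x in M. norm ((f x - g x)\<^sup>2) \<le> norm (2 * (f x)\<^sup>2 + 2 * (g x)\<^sup>2)"
    using square_add_le[of "f _" "- g _"] by simp
qed (use assms in auto)

lemma abs_integral_mult_le: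
  fixes f g :: "'a \<Rightarrow> real"
  assumes f: "integrable M (\<lambda>x. (f x)\<^sup>2)" and g: "integrable M (\<lambda>x. (g x)\<^sup>2)"
    and [measurable]: "f \<in> borel_measurable M" "g \<in> borel_measurable M"
  shows "integrable M (\<lambda>x. f x * g x)"
    and "\<bar>\<integral>x. f x * g x \<partial>M\<bar> \<le> sqrt ((\<integral>x. (f x)\<^sup>2 \<partial>M) * (\<integral>x. (g x)\<^sup>2 \<partial>M))"
proof -
  have sqrt_eq: "sqrt ((f x)\<^sup>2) * sqrt ((g x)\<^sup>2) = \<bar>f x * g x\<bar>" for x by (simp add: abs_mult)
  have int: "integrable M (\<lambda>x. \<bar>f x * g x\<bar>)"
    using integrable_sqrt_mult[OF f g] unfolding sqrt_eq by simp
  then show "integrable M (\<lambda>x. f x * g x)" by (simp add: integrable_abs_iff)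
  have "\<bar>\<integral>x. f x * g x \<partial>M\<bar> \<le> (\<integral>x. \<bar>f x * g x\<bar> \<partial>M)" by (rule integral_abs_bound)
  also have "\<dots> \<le> sqrt ((\<integral>x. (f x)\<^sup>2 \<partial>M) * (\<integral>x. (g x)\<^sup>2 \<partial>M))"
    using Cauchy_Schwarz_integral_sqrt[OF f _ g] unfolding sqrt_eq by (simp add: real_le_rsqrt)
  finally show "\<bar>\<integral>x. f x * g x \<partial>M\<bar> \<le> sqrt ((\<integral>x. (f x)\<^sup>2 \<partial>M) * (\<integral>x. (g x)\<^sup>2 \<partial>M))" .
qed

context prob_space
begin

lemma integral_abs_le_sqrt_integral_square:
  fixes g :: "'a \<Rightarrow> real"
  assumes "integrable M (\<lambda>x. (g x)\<^sup>2)" "g \<in> borel_measurable M"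
  shows "(\<integral>x. \<bar>g x\<bar> \<partial>M) \<le> sqrt (\<integral>x. (g x)\<^sup>2 \<partial>M)"
proof -
  have "(\<integral>x. sqrt ((g x)\<^sup>2) * sqrt 1 \<partial>M)\<^sup>2 \<le> (\<integral>x. (g x)\<^sup>2 \<partial>M) * (\<integral>x. 1 \<partial>M)"
    by (rule Cauchy_Schwarz_integral_sqrt) (use assms in auto)
  then show ?thesis by (simp add: prob_space real_le_rsqrt)
qed

lemma tendsto_integral_square_of_L2:
  fixes fn :: "nat \<Rightarrow> 'a \<Rightarrow> real"
  assumes f: "f \<in> borel_measurable M" "integrable M (\<lambda>x. (f x)\<^sup>2)"
    and fn: "\<And>n. fn n \<in> borel_measurable M" "\<And>n. integrable M (\<lambda>x. (fn n x)\<^sup>2)"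
    and L2: "(\<lambda>n. \<integral>x. (fn n x - f x)\<^sup>2 \<partial>M) \<longlonglongrightarrow> 0"
  shows "(\<lambda>n. \<integral>x. (fn n x)\<^sup>2 \<partial>M) \<longlonglongrightarrow> (\<integral>x. (f x)\<^sup>2 \<partial>M)"
proof -
  define d where "d n = (\<integral>x. (fn n x - f x)\<^sup>2 \<partial>M)" for n
  define A where "A = (\<integral>x. (f x)\<^sup>2 \<partial>M)"
  have bound: "\<forall>n. norm ((\<integral>x. (fn n x)\<^sup>2 \<partial>M) - A) \<le> d n + 2 * sqrt (A * d n)"
  proof
    fix n
    define Y where "Y = (\<integral>x. f x * (fn n x - f x) \<partial>M)"
    have dn: "integrable M (\<lambda>x. (fn n x - f x)\<^sup>2)"
      using integrable_square_diff[OF fn(2) f(2) fn(1) f(1)] .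
    have "(\<lambda>x. fn n x - f x) \<in> borel_measurable M" using fn(1) f(1) by simp
    note cross = abs_integral_mult_le[OF f(2) dn f(1) this]
    have "(\<lambda>x. (fn n x)\<^sup>2) = (\<lambda>x. (fn n x - f x)\<^sup>2 + 2 * (f x * (fn n x - f x)) + (f x)\<^sup>2)"
      by (simp add: fun_eq_iff power2_eq_square algebra_simps)
    then have "(\<integral>x. (fn n x)\<^sup>2 \<partial>M) - A = d n + 2 * Y"
      unfolding d_def A_def Y_def using dn cross(1) f(2) by simp
    then have "\<bar>(\<integral>x. (fn n x)\<^sup>2 \<partial>M) - A\<bar> \<le> \<bar>d n\<bar> + \<bar>2 * Y\<bar>"
      by (simp only: abs_triangle_ineq)
    also have "\<dots> \<le> d n + 2 * sqrt (A * d n)"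
      using cross(2) unfolding Y_def d_def A_def by (simp add: abs_mult)
    finally show "norm ((\<integral>x. (fn n x)\<^sup>2 \<partial>M) - A) \<le> d n + 2 * sqrt (A * d n)" by simp
  qed
  have "d \<longlonglongrightarrow> 0" unfolding d_def[abs_def] by (rule L2)
  then have "(\<lambda>n. d n + 2 * sqrt (A * d n)) \<longlonglongrightarrow> 0 + 2 * sqrt (A * 0)" by (intro tendsto_intros)
  then have "(\<lambda>n. (\<integral>x. (fn n x)\<^sup>2 \<partial>M) - A) \<longlonglongrightarrow> 0"
    by (intro Lim_null_comparison[OF always_eventually[OF bound]]) simp
  then show ?thesis unfolding A_def by (rule LIM_zero_cancel)
qed

lemma tendsto_integral_abs_of_L2:
  fixes fn :: "nat \<Rightarrow> 'a \<Rightarrow> real"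
  assumes f: "f \<in> borel_measurable M" "integrable M (\<lambda>x. (f x)\<^sup>2)"
    and fn: "\<And>n. fn n \<in> borel_measurable M" "\<And>n. integrable M (\<lambda>x. (fn n x)\<^sup>2)"
    and L2: "(\<lambda>n. \<integral>x. (fn n x - f x)\<^sup>2 \<partial>M) \<longlonglongrightarrow> 0"
  shows "(\<lambda>n. \<integral>x. \<bar>fn n x\<bar> \<partial>M) \<longlonglongrightarrow> (\<integral>x. \<bar>f x\<bar> \<partial>M)"
proof -
  have bound: "\<forall>n. norm ((\<integral>x. \<bar>fn n x\<bar> \<partial>M) - (\<integral>x. \<bar>f x\<bar> \<partial>M)) \<le> sqrt (\<integral>x. (fn n x - f x)\<^sup>2 \<partial>M)"
  proof
    fix n
    have "integrable M f" "integrable M (fn n)"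
      using square_integrable_imp_integrable[OF f] square_integrable_imp_integrable[OF fn] .
    then have int: "integrable M (\<lambda>x. \<bar>fn n x\<bar>)" "integrable M (\<lambda>x. \<bar>f x\<bar>)"
      "integrable M (\<lambda>x. \<bar>fn n x - f x\<bar>)"
      by auto
    have "\<bar>(\<integral>x. \<bar>fn n x\<bar> \<partial>M) - (\<integral>x. \<bar>f x\<bar> \<partial>M)\<bar> = \<bar>\<integral>x. \<bar>fn n x\<bar> - \<bar>f x\<bar> \<partial>M\<bar>"
      using int by simp
    also have "\<dots> \<le> (\<integral>x. \<bar>\<bar>fn n x\<bar> - \<bar>f x\<bar>\<bar> \<partial>M)"
      by (rule integral_abs_bound)
    also have "\<dots> \<le> (\<integral>x. \<bar>fn n x - f x\<bar> \<partial>M)"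
      using int by (intro integral_mono) (auto intro: abs_triangle_ineq3)
    also have "\<dots> \<le> sqrt (\<integral>x. (fn n x - f x)\<^sup>2 \<partial>M)"
      using integrable_square_diff[OF fn(2) f(2) fn(1) f(1)]
      by (rule integral_abs_le_sqrt_integral_square) (use f fn in measurable)
    finally show "norm ((\<integral>x. \<bar>fn n x\<bar> \<partial>M) - (\<integral>x. \<bar>f x\<bar> \<partial>M)) \<le> sqrt (\<integral>x. (fn n x - f x)\<^sup>2 \<partial>M)"
      by simp
  qed
  have "(\<lambda>n. sqrt (\<integral>x. (fn n x - f x)\<^sup>2 \<partial>M)) \<longlonglongrightarrow> 0"
    using tendsto_real_sqrt[OF L2] by simp
  then have "(\<lambda>n. (\<integral>x. \<bar>fn n x\<bar> \<partial>M) - (\<integral>x. \<bar>f x\<bar> \<partial>M)) \<longlonglongrightarrow> 0"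
    by (rule Lim_null_comparison[OF always_eventually[OF bound]])
  then show ?thesis by (rule LIM_zero_cancel)
qed

end

lemma le_add_Inf_mult:
  fixes a c x :: real
  assumes "S \<noteq> {}" "0 \<le> x" "\<And>B. B \<in> S \<Longrightarrow> a \<le> c + B * x"
  shows "a \<le> c + Inf S * x"
proof (cases "x = 0")
  case True
  then show ?thesis using assms by auto
next
  case False
  with assms(2) have "0 < x" by simp
  have "(a - c) / x \<le> B" if "B \<in> S" for B
    using assms(3)[OF that] \<open>0 < x\<close> by (simp add: pos_divide_le_eq)
  then have "(a - c) / x \<le> Inf S" by (intro cInf_greatest[OF assms(1)])
  then show ?thesis using \<open>0 < x\<close> by (simp add: pos_divide_le_eq algebra_simps)
qed

section \<open>The jump form and its closure\<close>

lemma nn_integral_lincomb_le: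
  fixes F G :: "'a \<Rightarrow> real"
  assumes [measurable]: "F \<in> borel_measurable M" "G \<in> borel_measurable M"
    and "\<And>y. 0 \<le> F y" "\<And>y. 0 \<le> G y" "0 \<le> A" "0 \<le> B" "0 \<le> CF" "0 \<le> CG"
    and "(\<integral>\<^sup>+y. ennreal (F y) \<partial>M) \<le> ennreal CF" "(\<integral>\<^sup>+y. ennreal (G y) \<partial>M) \<le> ennreal CG"
  shows "(\<integral>\<^sup>+y. ennreal (A * F y + B * G y) \<partial>M) \<le> ennreal (A * CF + B * CG)"
proof -
  have "(\<integral>\<^sup>+y. ennreal (A * F y + B * G y) \<partial>M)
      = ennreal A * (\<integral>\<^sup>+y. ennreal (F y) \<partial>M) + ennreal B * (\<integral>\<^sup>+y. ennreal (G y) \<partial>M)"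
    using assms(3-6)
    by (simp add: ennreal_mult ennreal_plus[symmetric] nn_integral_add nn_integral_cmult)
  also have "\<dots> \<le> ennreal A * ennreal CF + ennreal B * ennreal CG"
    using assms(9,10) by (intro add_mono mult_left_mono) auto
  also have "\<dots> = ennreal (A * CF + B * CG)"
    using assms(5-8) by (simp add: ennreal_mult ennreal_plus)
  finally show ?thesis .
qed

lemma measurable_iff_sets_eq_borel:
  "sets N = sets borel \<Longrightarrow> f \<in> borel_measurable N \<longleftrightarrow> f \<in> borel_measurable borel"
  by (metis measurable_cong_sets)

locale jump_form =
  fixes \<mu> :: "'a::topological_space measure" and q :: "'a \<Rightarrow> 'a \<Rightarrow> real"
  assumes sets_\<mu>: "sets \<mu> = sets borel" and prob_\<mu>: "prob_space \<mu>"
    and q_measurable: "(\<lambda>(x, y). q x y) \<in> borel_measurable (borel \<Otimes>\<^sub>M borel)"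
    and q_nonneg: "\<And>x y. q x y \<ge> 0"
begin

lemma jump_integrand_nonneg [simp]: "0 \<le> c\<^sup>2 * q x y"
  by (simp add: q_nonneg)

lemma measurable_\<mu>_iff: "f \<in> borel_measurable \<mu> \<longleftrightarrow> f \<in> borel_measurable borel"
  by (rule measurable_iff_sets_eq_borel[OF sets_\<mu>])

lemma q_measurable_pair:
  assumes "sets N = sets borel"
  shows "(\<lambda>(x, y). q x y) \<in> borel_measurable (N \<Otimes>\<^sub>M \<mu>)"
  using q_measurable measurable_cong_sets[OF sets_pair_measure_cong[OF assms sets_\<mu>] refl] by metis

lemma q_measurable_right [measurable]: "q x \<in> borel_measurable \<mu>"
  using measurable_Pair2[OF q_measurable_pair[OF sets_\<mu>], of x] sets_eq_imp_space_eq[OF sets_\<mu>] by simp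

lemma jump_integrand_measurable:
  assumes N: "sets N = sets borel" and f: "f \<in> borel_measurable borel"
  shows "(\<lambda>(x, y). (f x - f y)\<^sup>2 * q x y) \<in> borel_measurable (N \<Otimes>\<^sub>M \<mu>)"
proof -
  have [measurable]: "(\<lambda>(x, y). q x y) \<in> borel_measurable (N \<Otimes>\<^sub>M \<mu>)"
    "f \<in> borel_measurable N" "f \<in> borel_measurable \<mu>"
    using q_measurable_pair[OF N] f measurable_iff_sets_eq_borel[OF N] measurable_\<mu>_iff by auto
  show ?thesis by measurable
qed

lemma algA_memD:
  assumes "f \<in> algA \<mu> q"
  shows "f \<in> borel_measurable borel" "f \<in> borel_measurable \<mu>" "\<exists>C. \<forall>x. \<bar>f x\<bar> \<le> C"
    "\<exists>C::real. \<forall>x. (\<integral>\<^sup>+ y. ennreal ((f x - f y)\<^sup>2 * q x y) \<partial>\<mu>) \<le> ennreal C"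
  using assms measurable_\<mu>_iff unfolding algA_def by auto

lemma algA_jump_bound:
  assumes "f \<in> algA \<mu> q"
  obtains C where "0 \<le> C" "\<And>x. (\<integral>\<^sup>+ y. ennreal ((f x - f y)\<^sup>2 * q x y) \<partial>\<mu>) \<le> ennreal C"
proof -
  obtain C where C: "\<And>x. (\<integral>\<^sup>+ y. ennreal ((f x - f y)\<^sup>2 * q x y) \<partial>\<mu>) \<le> ennreal C"
    using algA_memD(4)[OF assms] by blast
  show ?thesis
  proof (rule that[of "max C 0"])
    show "(\<integral>\<^sup>+ y. ennreal ((f x - f y)\<^sup>2 * q x y) \<partial>\<mu>) \<le> ennreal (max C 0)" for x
      using C[of x] by (meson ennreal_leI max.cobounded1 order_trans)
  qed simp
qed

lemma algA_square_bounded: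
  assumes "f \<in> algA \<mu> q"
  obtains C where "\<And>x. \<bar>(f x)\<^sup>2\<bar> \<le> C"
proof -
  obtain C where C: "\<And>x. \<bar>f x\<bar> \<le> C" using algA_memD(3)[OF assms] by blast
  have "\<bar>(f x)\<^sup>2\<bar> \<le> C\<^sup>2" for x using power_mono[OF C[of x] abs_ge_zero, of 2] by simp
  then show ?thesis by (rule that)
qed

lemma integrable_jump_integrand:
  assumes f: "f \<in> algA \<mu> q"
  shows "integrable \<mu> (\<lambda>y. (f x - f y)\<^sup>2 * q x y)"
proof -
  have [measurable]: "f \<in> borel_measurable \<mu>" by (rule algA_memD(2)[OF f])
  obtain C where C: "\<And>x. (\<integral>\<^sup>+ y. ennreal ((f x - f y)\<^sup>2 * q x y) \<partial>\<mu>) \<le> ennreal C"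
    using algA_jump_bound[OF f] by blast
  show ?thesis
    by (rule integrableI_nonneg) (auto intro!: q_nonneg le_less_trans[OF C])
qed

lemma Gamma_diag: "Gamma \<mu> q f f x = (\<integral> y. (f x - f y)\<^sup>2 * q x y \<partial>\<mu>)"
  unfolding Gamma_def by (simp add: power2_eq_square)

lemma Gamma_nonneg: "0 \<le> Gamma \<mu> q f f x"
  unfolding Gamma_diag by (auto intro!: integral_nonneg_AE q_nonneg)

lemma ennreal_Gamma:
  assumes "f \<in> algA \<mu> q"
  shows "ennreal (Gamma \<mu> q f f x) = (\<integral>\<^sup>+ y. ennreal ((f x - f y)\<^sup>2 * q x y) \<partial>\<mu>)"
  unfolding Gamma_diag using integrable_jump_integrand[OF assms, of x]
  by (subst nn_integral_eq_integral) (auto intro!: q_nonneg)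

lemma Gamma_bounded:
  assumes f: "f \<in> algA \<mu> q"
  obtains C where "\<And>x. Gamma \<mu> q f f x \<le> C"
proof -
  obtain C where C: "0 \<le> C" "\<And>x. (\<integral>\<^sup>+ y. ennreal ((f x - f y)\<^sup>2 * q x y) \<partial>\<mu>) \<le> ennreal C"
    using algA_jump_bound[OF f] by blast
  have "Gamma \<mu> q f f x \<le> C" for x
    using C(2)[of x] C(1) unfolding ennreal_Gamma[OF f, symmetric] by simp
  then show ?thesis by (rule that)
qed

lemma Gamma_measurable:
  assumes N: "sets N = sets borel" and f: "f \<in> borel_measurable borel"
  shows "Gamma \<mu> q f f \<in> borel_measurable N"
proof -
  interpret prob_space \<mu> by (rule prob_\<mu>)
  have "Gamma \<mu> q f f = (\<lambda>x. \<integral> y. (f x - f y)\<^sup>2 * q x y \<partial>\<mu>)"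
    by (simp add: fun_eq_iff Gamma_diag)
  then show ?thesis
    using borel_measurable_lebesgue_integral[OF jump_integrand_measurable[OF N f]] by simp
qed

lemma integrable_Gamma:
  assumes N: "sets N = sets borel" "finite_measure N" and f: "f \<in> algA \<mu> q"
  shows "integrable N (Gamma \<mu> q f f)"
proof -
  interpret finite_measure N by (rule N(2))
  obtain C where "\<And>x. Gamma \<mu> q f f x \<le> C" using Gamma_bounded[OF f] by blast
  then show ?thesis
    by (intro integrable_const_bound[where B=C])
      (auto simp: Gamma_nonneg Gamma_measurable[OF N(1) algA_memD(1)[OF f]])
qed

lemma energy_nonneg: "0 \<le> energy \<mu> q N f"
  unfolding energy_def by (auto intro!: integral_nonneg_AE Gamma_nonneg)

lemma energy_const: "energy \<mu> q N (\<lambda>x. c) = 0"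
  unfolding energy_def Gamma_def by simp

lemma ennreal_energy:
  assumes N: "sets N = sets borel" "finite_measure N" and f: "f \<in> algA \<mu> q"
  shows "ennreal (energy \<mu> q N f) = (\<integral>\<^sup>+ x. (\<integral>\<^sup>+ y. ennreal ((f x - f y)\<^sup>2 * q x y) \<partial>\<mu>) \<partial>N)"
  unfolding energy_def ennreal_Gamma[OF f, symmetric]
  using integrable_Gamma[OF N f] by (subst nn_integral_eq_integral) (auto simp: Gamma_nonneg)

lemma jump_integrand_le_lincomb:
  assumes "(h x - h y)\<^sup>2 \<le> A * (f x - f y)\<^sup>2 + B * (g x - g y)\<^sup>2"
  shows "(h x - h y)\<^sup>2 * q x y \<le> A * ((f x - f y)\<^sup>2 * q x y) + B * ((g x - g y)\<^sup>2 * q x y)"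
  using mult_right_mono[OF assms q_nonneg] by (simp add: algebra_simps)

lemma algA_dominated:
  assumes f: "f \<in> algA \<mu> q" and g: "g \<in> algA \<mu> q" and h: "h \<in> borel_measurable borel"
    and h_bounded: "\<exists>C. \<forall>x. \<bar>h x\<bar> \<le> C" and "0 \<le> A" "0 \<le> B"
    and dominated: "\<And>x y. (h x - h y)\<^sup>2 \<le> A * (f x - f y)\<^sup>2 + B * (g x - g y)\<^sup>2"
  shows "h \<in> algA \<mu> q"
proof -
  obtain CF where CF: "0 \<le> CF" "\<And>x. (\<integral>\<^sup>+ y. ennreal ((f x - f y)\<^sup>2 * q x y) \<partial>\<mu>) \<le> ennreal CF"
    using algA_jump_bound[OF f] by blast
  obtain CG where CG: "0 \<le> CG" "\<And>x. (\<integral>\<^sup>+ y. ennreal ((g x - g y)\<^sup>2 * q x y) \<partial>\<mu>) \<le> ennreal CG"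
    using algA_jump_bound[OF g] by blast
  have [measurable]: "f \<in> borel_measurable \<mu>" "g \<in> borel_measurable \<mu>"
    using algA_memD(2) f g by auto
  have "(\<integral>\<^sup>+ y. ennreal ((h x - h y)\<^sup>2 * q x y) \<partial>\<mu>) \<le> ennreal (A * CF + B * CG)" for x
  proof -
    have "(\<integral>\<^sup>+ y. ennreal ((h x - h y)\<^sup>2 * q x y) \<partial>\<mu>) \<le>
        (\<integral>\<^sup>+ y. ennreal (A * ((f x - f y)\<^sup>2 * q x y) + B * ((g x - g y)\<^sup>2 * q x y)) \<partial>\<mu>)"
      by (intro nn_integral_mono ennreal_leI jump_integrand_le_lincomb dominated)
    also have "\<dots> \<le> ennreal (A * CF + B * CG)"
      by (rule nn_integral_lincomb_le) (use assms(5,6) CF CG in auto)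
    finally show ?thesis .
  qed
  then show ?thesis using h h_bounded measurable_\<mu>_iff unfolding algA_def by blast
qed

lemma algA_const: "(\<lambda>x. c) \<in> algA \<mu> q"
  unfolding algA_def by (auto intro!: exI[of _ 0] exI[of _ "\<bar>c\<bar>"])

lemma algA_add:
  assumes f: "f \<in> algA \<mu> q" and g: "g \<in> algA \<mu> q"
  shows "(\<lambda>x. f x + g x) \<in> algA \<mu> q"
proof (rule algA_dominated[OF f g])
  obtain C1 C2 where "\<And>x. \<bar>f x\<bar> \<le> C1" "\<And>x. \<bar>g x\<bar> \<le> C2"
    using algA_memD(3)[OF f] algA_memD(3)[OF g] by blast
  then have "\<bar>f x + g x\<bar> \<le> C1 + C2" for x
    using abs_triangle_ineq[of "f x" "g x"] by (meson add_mono order_trans)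
  then show "\<exists>C. \<forall>x. \<bar>f x + g x\<bar> \<le> C" by blast
  show "(f x + g x - (f y + g y))\<^sup>2 \<le> 2 * (f x - f y)\<^sup>2 + 2 * (g x - g y)\<^sup>2" for x y
    using square_add_le[of "f x - f y" "g x - g y"] by (simp add: add_diff_add)
qed (use algA_memD(1)[OF f] algA_memD(1)[OF g] in auto)

lemma algA_scale:
  assumes f: "f \<in> algA \<mu> q"
  shows "(\<lambda>x. c * f x) \<in> algA \<mu> q"
proof (rule algA_dominated[OF f f])
  obtain C where "\<And>x. \<bar>f x\<bar> \<le> C" using algA_memD(3)[OF f] by blast
  then show "\<exists>C. \<forall>x. \<bar>c * f x\<bar> \<le> C"
    by (intro exI[of _ "\<bar>c\<bar> * C"]) (simp add: abs_mult mult_left_mono)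
  show "(c * f x - c * f y)\<^sup>2 \<le> c\<^sup>2 * (f x - f y)\<^sup>2 + 0 * (f x - f y)\<^sup>2" for x y
    by (simp add: power2_eq_square algebra_simps)
qed (use algA_memD(1)[OF f] in auto)

lemma algA_diff:
  assumes "f \<in> algA \<mu> q" "g \<in> algA \<mu> q"
  shows "(\<lambda>x. f x - g x) \<in> algA \<mu> q"
  using algA_add[OF assms(1) algA_scale[OF assms(2), of "-1"]] by simp

lemma Gamma_dominated:
  assumes f: "f \<in> algA \<mu> q" and g: "g \<in> algA \<mu> q" and h: "h \<in> algA \<mu> q"
    and "0 \<le> A" "0 \<le> B"
    and dominated: "\<And>x y. (h x - h y)\<^sup>2 \<le> A * (f x - f y)\<^sup>2 + B * (g x - g y)\<^sup>2"
  shows "Gamma \<mu> q h h x \<le> A * Gamma \<mu> q f f x + B * Gamma \<mu> q g g x"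
proof -
  have "Gamma \<mu> q h h x \<le> (\<integral> y. A * ((f x - f y)\<^sup>2 * q x y) + B * ((g x - g y)\<^sup>2 * q x y) \<partial>\<mu>)"
    unfolding Gamma_diag
    using integrable_jump_integrand[OF f, of x] integrable_jump_integrand[OF g, of x]
      integrable_jump_integrand[OF h, of x]
    by (intro integral_mono jump_integrand_le_lincomb dominated) auto
  also have "\<dots> = A * Gamma \<mu> q f f x + B * Gamma \<mu> q g g x"
    unfolding Gamma_diag using integrable_jump_integrand[OF f, of x] integrable_jump_integrand[OF g, of x]
    by simp
  finally show ?thesis .
qed

lemma energy_dominated:
  assumes N: "sets N = sets borel" "finite_measure N"
    and f: "f \<in> algA \<mu> q" and g: "g \<in> algA \<mu> q" and h: "h \<in> algA \<mu> q"
    and "0 \<le> A" "0 \<le> B"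
    and dominated: "\<And>x y. (h x - h y)\<^sup>2 \<le> A * (f x - f y)\<^sup>2 + B * (g x - g y)\<^sup>2"
  shows "energy \<mu> q N h \<le> A * energy \<mu> q N f + B * energy \<mu> q N g"
proof -
  have "energy \<mu> q N h \<le> (\<integral> x. A * Gamma \<mu> q f f x + B * Gamma \<mu> q g g x \<partial>N)"
    unfolding energy_def using integrable_Gamma[OF N f] integrable_Gamma[OF N g] integrable_Gamma[OF N h]
    by (intro integral_mono Gamma_dominated[OF f g h assms(6,7) dominated]) auto
  also have "\<dots> = A * energy \<mu> q N f + B * energy \<mu> q N g"
    unfolding energy_def using integrable_Gamma[OF N f] integrable_Gamma[OF N g] by simp
  finally show ?thesis .
qed

lemma energy_add_le:
  assumes N: "sets N = sets borel" "finite_measure N"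
    and f: "f \<in> algA \<mu> q" and g: "g \<in> algA \<mu> q" and "t > 0"
  shows "energy \<mu> q N (\<lambda>x. f x + g x) \<le> (1 + t) * energy \<mu> q N f + (1 + 1/t) * energy \<mu> q N g"
proof (rule energy_dominated[OF N f g algA_add[OF f g]])
  show "(f x + g x - (f y + g y))\<^sup>2 \<le> (1 + t) * (f x - f y)\<^sup>2 + (1 + 1 / t) * (g x - g y)\<^sup>2" for x y
    using square_add_le_weighted[OF \<open>t > 0\<close>, of "f x - f y" "g x - g y"] by (simp add: add_diff_add)
qed (use \<open>t > 0\<close> in auto)

lemma energy_uminus:
  assumes N: "sets N = sets borel" "finite_measure N" and f: "f \<in> algA \<mu> q"
  shows "energy \<mu> q N (\<lambda>x. - f x) = energy \<mu> q N f"
proof -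
  have "energy \<mu> q N (\<lambda>x. - f x) = energy \<mu> q N (\<lambda>x. (-1) * f x)" by simp
  also have "Gamma \<mu> q (\<lambda>x. (-1) * f x) (\<lambda>x. (-1) * f x) = Gamma \<mu> q f f"
    by (simp add: fun_eq_iff Gamma_def algebra_simps)
  then have "energy \<mu> q N (\<lambda>x. (-1) * f x) = energy \<mu> q N f" by (simp add: energy_def)
  finally show ?thesis .
qed

lemma sqrt_energy_add_le:
  assumes N: "sets N = sets borel" "finite_measure N" and "f \<in> algA \<mu> q" "g \<in> algA \<mu> q"
  shows "sqrt (energy \<mu> q N (\<lambda>x. f x + g x)) \<le> sqrt (energy \<mu> q N f) + sqrt (energy \<mu> q N g)"
  by (rule sqrt_le_sqrt_add_of_weighted_bound[OF energy_add_le[OF N assms(3,4)] energy_nonneg energy_nonneg])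

lemma abs_sqrt_energy_diff_le:
  assumes N: "sets N = sets borel" "finite_measure N" and f: "f \<in> algA \<mu> q" and g: "g \<in> algA \<mu> q"
  shows "\<bar>sqrt (energy \<mu> q N f) - sqrt (energy \<mu> q N g)\<bar> \<le> sqrt (energy \<mu> q N (\<lambda>x. f x - g x))"
proof -
  have "sqrt (energy \<mu> q N f) \<le> sqrt (energy \<mu> q N g) + sqrt (energy \<mu> q N (\<lambda>x. f x - g x))"
    using sqrt_energy_add_le[OF N g algA_diff[OF f g]] by simp
  moreover have "sqrt (energy \<mu> q N g) \<le> sqrt (energy \<mu> q N f) + sqrt (energy \<mu> q N (\<lambda>x. - (f x - g x)))"
    using sqrt_energy_add_le[OF N f algA_scale[OF algA_diff[OF f g], of "-1"]] by simp
  then have "sqrt (energy \<mu> q N g) \<le> sqrt (energy \<mu> q N f) + sqrt (energy \<mu> q N (\<lambda>x. f x - g x))"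
    by (simp only: energy_uminus[OF N algA_diff[OF f g]])
  ultimately show ?thesis unfolding abs_le_iff by linarith
qed

lemma convergent_energy:
  assumes N: "sets N = sets borel" "finite_measure N" and fn: "\<And>n. fn n \<in> algA \<mu> q"
    and Cauchy: "\<And>\<epsilon>. \<epsilon> > 0 \<Longrightarrow> \<exists>M. \<forall>m\<ge>M. \<forall>n\<ge>M. energy \<mu> q N (\<lambda>x. fn n x - fn m x) < \<epsilon>"
  shows "convergent (\<lambda>n. energy \<mu> q N (fn n))"
proof -
  have "Cauchy (\<lambda>n. sqrt (energy \<mu> q N (fn n)))"
  proof (rule CauchyI)
    fix e :: real assume "e > 0"
    then obtain M where M: "\<And>m n. m \<ge> M \<Longrightarrow> n \<ge> M \<Longrightarrow> energy \<mu> q N (\<lambda>x. fn m x - fn n x) < e\<^sup>2"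
      using Cauchy[of "e\<^sup>2"] by auto
    have "norm (sqrt (energy \<mu> q N (fn m)) - sqrt (energy \<mu> q N (fn n))) < e" if "m \<ge> M" "n \<ge> M" for m n
    proof -
      have "norm (sqrt (energy \<mu> q N (fn m)) - sqrt (energy \<mu> q N (fn n)))
          \<le> sqrt (energy \<mu> q N (\<lambda>x. fn m x - fn n x))"
        using abs_sqrt_energy_diff_le[OF N fn fn] by simp
      also have "\<dots> < sqrt (e\<^sup>2)" using M[OF that] by (rule real_sqrt_less_mono)
      finally show ?thesis using \<open>e > 0\<close> by simp
    qed
    then show "\<exists>M. \<forall>m\<ge>M. \<forall>n\<ge>M. norm (sqrt (energy \<mu> q N (fn m)) - sqrt (energy \<mu> q N (fn n))) < e"
      by blast
  qed
  then obtain L where "(\<lambda>n. sqrt (energy \<mu> q N (fn n))) \<longlonglongrightarrow> L"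
    by (auto simp: Cauchy_convergent_iff convergent_def)
  then have "(\<lambda>n. (sqrt (energy \<mu> q N (fn n)))\<^sup>2) \<longlonglongrightarrow> L\<^sup>2" by (rule tendsto_power)
  then show ?thesis by (auto simp: convergent_def energy_nonneg)
qed

lemma energy_le_of_AE_tendsto:
  assumes u: "u \<in> algA \<mu> q" and v: "\<And>m. v m \<in> algA \<mu> q"
    and lim: "AE x in \<mu>. (\<lambda>m. v m x) \<longlonglongrightarrow> u x"
    and ev: "eventually (\<lambda>m. energy \<mu> q \<mu> (v m) \<le> \<epsilon>) sequentially" and "0 \<le> \<epsilon>"
  shows "energy \<mu> q \<mu> u \<le> \<epsilon>"
proof -
  interpret prob_space \<mu> by (rule prob_\<mu>)
  note fin = finite_measure_axioms
  define D where "D m x y = ennreal ((v m x - v m y)\<^sup>2 * q x y)" for m x y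
  have D_measurable: "(\<lambda>(x, y). D m x y) \<in> borel_measurable (\<mu> \<Otimes>\<^sub>M \<mu>)" for m
    using measurable_compose[OF jump_integrand_measurable[OF sets_\<mu> algA_memD(1)[OF v[of m]]] measurable_ennreal]
    by (simp add: D_def case_prod_beta')
  have liminf_D: "AE x in \<mu>. AE y in \<mu>. liminf (\<lambda>m. D m x y) = ennreal ((u x - u y)\<^sup>2 * q x y)"
    using lim
  proof eventually_elim
    case (elim x)
    show ?case
      using lim
    proof eventually_elim
      case (elim y)
      have "(\<lambda>m. D m x y) \<longlonglongrightarrow> ennreal ((u x - u y)\<^sup>2 * q x y)"
        unfolding D_def using \<open>(\<lambda>m. v m x) \<longlonglongrightarrow> u x\<close> elim by (intro tendsto_ennrealI tendsto_intros)
      then show ?case by (intro lim_imp_Liminf) auto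
    qed
  qed
  have "ennreal (energy \<mu> q \<mu> u) = (\<integral>\<^sup>+ x. (\<integral>\<^sup>+ y. ennreal ((u x - u y)\<^sup>2 * q x y) \<partial>\<mu>) \<partial>\<mu>)"
    by (rule ennreal_energy[OF sets_\<mu> fin u])
  also have "\<dots> = (\<integral>\<^sup>+ x. (\<integral>\<^sup>+ y. liminf (\<lambda>m. D m x y) \<partial>\<mu>) \<partial>\<mu>)"
    by (intro nn_integral_cong_AE) (use liminf_D in \<open>auto elim!: eventually_mono intro!: nn_integral_cong_AE\<close>)
  also have "\<dots> \<le> (\<integral>\<^sup>+ x. liminf (\<lambda>m. \<integral>\<^sup>+ y. D m x y \<partial>\<mu>) \<partial>\<mu>)"
    using measurable_Pair2[OF D_measurable] sets_eq_imp_space_eq[OF sets_\<mu>]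
    by (intro nn_integral_mono nn_integral_liminf) simp
  also have "\<dots> \<le> liminf (\<lambda>m. \<integral>\<^sup>+ x. (\<integral>\<^sup>+ y. D m x y \<partial>\<mu>) \<partial>\<mu>)"
    by (intro nn_integral_liminf borel_measurable_nn_integral D_measurable)
  also have "\<dots> = liminf (\<lambda>m. ennreal (energy \<mu> q \<mu> (v m)))"
    unfolding D_def using ennreal_energy[OF sets_\<mu> fin v] by simp
  also have "\<dots> \<le> ennreal \<epsilon>"
    by (intro Liminf_le) (use ev in \<open>auto elim!: eventually_mono intro: ennreal_leI\<close>)
  finally show ?thesis using \<open>0 \<le> \<epsilon>\<close> by (simp add: ennreal_le_iff)
qed

lemma integrable_square_algA:
  assumes "finite_measure N" "sets N = sets borel" and g: "g \<in> algA \<mu> q"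
  shows "integrable N (\<lambda>x. (g x)\<^sup>2)"
proof -
  interpret finite_measure N by (rule assms(1))
  obtain C where C: "\<And>x. \<bar>g x\<bar> \<le> C" using algA_memD(3)[OF g] by blast
  have "\<bar>(g x)\<^sup>2\<bar> \<le> C\<^sup>2" for x using power_mono[OF C[of x] abs_ge_zero, of 2] by simp
  moreover have "g \<in> borel_measurable N"
    using algA_memD(1)[OF g] measurable_iff_sets_eq_borel[OF assms(2)] by blast
  ultimately show ?thesis by (intro integrable_const_bound[where B="C\<^sup>2"]) auto
qed

lemma AE_tendsto_subseq_of_approx_seq:
  assumes g: "g \<in> algA \<mu> q" and approx: "approx_seq \<mu> q \<mu> fn g"
  obtains r :: "nat \<Rightarrow> nat" where "strict_mono r" "AE x in \<mu>. (\<lambda>m. fn (r m) x) \<longlonglongrightarrow> g x"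
proof -
  have diff: "(\<lambda>x. fn n x - g x) \<in> algA \<mu> q" for n
    using approx by (intro algA_diff g) (simp add: approx_seq_def)
  have "integrable \<mu> (\<lambda>x. (fn n x - g x)\<^sup>2)" for n
    by (rule integrable_square_algA[OF prob_space.finite_measure[OF prob_\<mu>] sets_\<mu> diff])
  then obtain r :: "nat \<Rightarrow> nat" where r: "strict_mono r"
    and square: "AE x in \<mu>. (\<lambda>m. (fn (r m) x - g x)\<^sup>2) \<longlonglongrightarrow> 0"
    using tendsto_L1_AE_subseq[where M=\<mu> and u="\<lambda>n x. (fn n x - g x)\<^sup>2"] approx
    by (auto simp: approx_seq_def)
  have "AE x in \<mu>. (\<lambda>m. fn (r m) x) \<longlonglongrightarrow> g x"
    using square
  proof (elim AE_mp, intro AE_I2 impI)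
    fix x assume "(\<lambda>m. (fn (r m) x - g x)\<^sup>2) \<longlonglongrightarrow> 0"
    then have "(\<lambda>m. sqrt ((fn (r m) x - g x)\<^sup>2)) \<longlonglongrightarrow> sqrt 0" by (rule tendsto_real_sqrt)
    then have "(\<lambda>m. fn (r m) x - g x) \<longlonglongrightarrow> 0" by (simp add: tendsto_rabs_zero_iff)
    then show "(\<lambda>m. fn (r m) x) \<longlonglongrightarrow> g x" by (simp add: LIM_zero_iff)
  qed
  with r show ?thesis by (rule that)
qed

lemma energy_diff_tendsto_zero:
  assumes g: "g \<in> algA \<mu> q" and approx: "approx_seq \<mu> q \<mu> fn g"
  shows "(\<lambda>n. energy \<mu> q \<mu> (\<lambda>x. fn n x - g x)) \<longlonglongrightarrow> 0"
proof (rule LIMSEQ_I)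
  fix \<epsilon> :: real assume "\<epsilon> > 0"
  from approx have fn: "\<And>n. fn n \<in> algA \<mu> q"
    and Cauchy: "\<And>\<epsilon>. \<epsilon> > 0 \<Longrightarrow> \<exists>N. \<forall>m\<ge>N. \<forall>n\<ge>N. energy \<mu> q \<mu> (\<lambda>x. fn n x - fn m x) < \<epsilon>"
    unfolding approx_seq_def by auto
  obtain r where r: "strict_mono r" and sub: "AE x in \<mu>. (\<lambda>m. fn (r m) x) \<longlonglongrightarrow> g x"
    using AE_tendsto_subseq_of_approx_seq[OF g approx] by blast
  obtain N where N: "\<And>m n. m \<ge> N \<Longrightarrow> n \<ge> N \<Longrightarrow> energy \<mu> q \<mu> (\<lambda>x. fn n x - fn m x) < \<epsilon> / 2"
    using Cauchy[of "\<epsilon> / 2"] \<open>\<epsilon> > 0\<close> by auto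
  have "energy \<mu> q \<mu> (\<lambda>x. fn n x - g x) \<le> \<epsilon> / 2" if "n \<ge> N" for n
  proof (rule energy_le_of_AE_tendsto[OF algA_diff[OF fn g] algA_diff[OF fn fn]])
    show "AE x in \<mu>. (\<lambda>m. fn n x - fn (r m) x) \<longlonglongrightarrow> fn n x - g x"
      using sub by eventually_elim (intro tendsto_intros)
    have "eventually (\<lambda>m. r m \<ge> N) sequentially"
      using eventually_ge_at_top[of N] by eventually_elim (meson order_trans seq_suble[OF r])
    then show "eventually (\<lambda>m. energy \<mu> q \<mu> (\<lambda>x. fn n x - fn (r m) x) \<le> \<epsilon> / 2) sequentially"
      by eventually_elim (use N that in \<open>auto intro: less_imp_le\<close>)
  qed (use \<open>\<epsilon> > 0\<close> in simp)
  then have "norm (energy \<mu> q \<mu> (\<lambda>x. fn n x - g x) - 0) < \<epsilon>" if "n \<ge> N" for n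
    using that \<open>\<epsilon> > 0\<close> energy_nonneg[of \<mu> "\<lambda>x. fn n x - g x"] by fastforce
  then show "\<exists>N. \<forall>n\<ge>N. norm (energy \<mu> q \<mu> (\<lambda>x. fn n x - g x) - 0) < \<epsilon>" by blast
qed

lemma approx_seq_const:
  assumes "finite_measure N" "g \<in> algA \<mu> q"
  shows "approx_seq \<mu> q N (\<lambda>n. g) g"
  unfolding approx_seq_def using assms(2) energy_const[of N 0] by (auto intro!: exI[of _ 0])

lemma algA_subset_form_dom: "algA \<mu> q \<subseteq> form_dom \<mu> q \<mu>"
proof
  fix g assume g: "g \<in> algA \<mu> q"
  interpret prob_space \<mu> by (rule prob_\<mu>)
  show "g \<in> form_dom \<mu> q \<mu>"
    unfolding form_dom_def using approx_seq_const[OF finite_measure_axioms g]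
      integrable_square_algA[OF finite_measure_axioms sets_\<mu> g] algA_memD(2)[OF g] by auto
qed

lemma form_val_tendsto:
  assumes N: "sets N = sets borel" "finite_measure N" and f: "f \<in> form_dom \<mu> q N"
  obtains fn where "approx_seq \<mu> q N fn f" "(\<lambda>n. energy \<mu> q N (fn n)) \<longlonglongrightarrow> form_val \<mu> q N f"
proof -
  obtain fn where approx: "approx_seq \<mu> q N fn f" using f unfolding form_dom_def by blast
  then have "convergent (\<lambda>n. energy \<mu> q N (fn n))"
    by (intro convergent_energy[OF N]) (auto simp: approx_seq_def)
  then have "\<exists>e fn. approx_seq \<mu> q N fn f \<and> (\<lambda>n. energy \<mu> q N (fn n)) \<longlonglongrightarrow> e"
    using approx by (auto simp: convergent_def)
  then have "\<exists>fn. approx_seq \<mu> q N fn f \<and> (\<lambda>n. energy \<mu> q N (fn n)) \<longlonglongrightarrow> form_val \<mu> q N f"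
    unfolding form_val_def by (rule someI_ex)
  then show ?thesis using that by blast
qed

lemma form_val_eq_energy:
  assumes g: "g \<in> algA \<mu> q"
  shows "form_val \<mu> q \<mu> g = energy \<mu> q \<mu> g"
proof -
  interpret prob_space \<mu> by (rule prob_\<mu>)
  note N = sets_\<mu> finite_measure_axioms
  obtain fn where approx: "approx_seq \<mu> q \<mu> fn g"
    and lim: "(\<lambda>n. energy \<mu> q \<mu> (fn n)) \<longlonglongrightarrow> form_val \<mu> q \<mu> g"
    using form_val_tendsto[OF N subsetD[OF algA_subset_form_dom g]] by blast
  have fn: "fn n \<in> algA \<mu> q" for n using approx by (simp add: approx_seq_def)
  have "(\<lambda>n. sqrt (energy \<mu> q \<mu> (fn n)) - sqrt (energy \<mu> q \<mu> g)) \<longlonglongrightarrow> 0"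
  proof (rule Lim_null_comparison[OF always_eventually])
    show "\<forall>n. norm (sqrt (energy \<mu> q \<mu> (fn n)) - sqrt (energy \<mu> q \<mu> g))
        \<le> sqrt (energy \<mu> q \<mu> (\<lambda>x. fn n x - g x))"
      using abs_sqrt_energy_diff_le[OF N fn g] by simp
    show "(\<lambda>n. sqrt (energy \<mu> q \<mu> (\<lambda>x. fn n x - g x))) \<longlonglongrightarrow> 0"
      using tendsto_real_sqrt[OF energy_diff_tendsto_zero[OF g approx]] by simp
  qed
  then have "(\<lambda>n. (sqrt (energy \<mu> q \<mu> (fn n)))\<^sup>2) \<longlonglongrightarrow> (sqrt (energy \<mu> q \<mu> g))\<^sup>2"
    by (intro tendsto_power) (simp add: LIM_zero_iff)
  then have "(\<lambda>n. energy \<mu> q \<mu> (fn n)) \<longlonglongrightarrow> energy \<mu> q \<mu> g" by (simp add: energy_nonneg)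
  with lim show ?thesis by (rule LIMSEQ_unique)
qed

lemma form_dom_inequality:
  assumes N: "prob_space N" "sets N = sets borel"
    and on_algA: "\<And>h. h \<in> algA \<mu> q \<Longrightarrow>
      (\<integral>x. (h x)\<^sup>2 \<partial>N) \<le> s * energy \<mu> q N h + B * (\<integral>x. \<bar>h x\<bar> \<partial>N)\<^sup>2"
    and f: "f \<in> form_dom \<mu> q N"
  shows "(\<integral>x. (f x)\<^sup>2 \<partial>N) \<le> s * form_val \<mu> q N f + B * (\<integral>x. \<bar>f x\<bar> \<partial>N)\<^sup>2"
proof -
  interpret N: prob_space N by (rule N(1))
  obtain fn where approx: "approx_seq \<mu> q N fn f"
    and lim: "(\<lambda>n. energy \<mu> q N (fn n)) \<longlonglongrightarrow> form_val \<mu> q N f"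
    using form_val_tendsto[OF N(2) N.finite_measure_axioms f] by blast
  have fn: "fn n \<in> algA \<mu> q" for n using approx by (simp add: approx_seq_def)
  have fn_L2: "fn n \<in> borel_measurable N" "integrable N (\<lambda>x. (fn n x)\<^sup>2)" for n
    using algA_memD(1)[OF fn] measurable_iff_sets_eq_borel[OF N(2)]
      integrable_square_algA[OF N.finite_measure_axioms N(2) fn] by auto
  have f_L2: "f \<in> borel_measurable N" "integrable N (\<lambda>x. (f x)\<^sup>2)"
    using f by (auto simp: form_dom_def)
  have L2: "(\<lambda>n. \<integral>x. (fn n x - f x)\<^sup>2 \<partial>N) \<longlonglongrightarrow> 0"
    using approx by (simp add: approx_seq_def)
  show ?thesis
  proof (rule LIMSEQ_le[OF N.tendsto_integral_square_of_L2[OF f_L2 fn_L2 L2]])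
    show "(\<lambda>n. s * energy \<mu> q N (fn n) + B * (\<integral>x. \<bar>fn n x\<bar> \<partial>N)\<^sup>2)
        \<longlonglongrightarrow> s * form_val \<mu> q N f + B * (\<integral>x. \<bar>f x\<bar> \<partial>N)\<^sup>2"
      by (intro tendsto_intros lim N.tendsto_integral_abs_of_L2[OF f_L2 fn_L2 L2])
    show "\<exists>N'. \<forall>n\<ge>N'. (\<integral>x. (fn n x)\<^sup>2 \<partial>N) \<le> s * energy \<mu> q N (fn n) + B * (\<integral>x. \<bar>fn n x\<bar> \<partial>N)\<^sup>2"
      using on_algA[OF fn] by blast
  qed
qed

end

section \<open>The weighted form\<close>

locale weighted_jump_form = jump_form \<mu> q for \<mu> :: "'a::metric_space measure" and q +
  fixes V :: "'a \<Rightarrow> real" and \<beta> :: "real \<Rightarrow> real" and \<kappa>1 :: real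
  assumes jump_scale_bounded:
      "\<exists>C::real. \<forall>x. (\<integral>\<^sup>+ y. ennreal (min 1 ((dist x y)\<^sup>2) * q x y) \<partial>\<mu>) \<le> ennreal C"
    and V_measurable: "V \<in> borel_measurable borel"
    and integrable_exp_V: "integrable \<mu> (\<lambda>x. exp (V x))"
    and integral_exp_V: "(\<integral> x. exp (V x) \<partial>\<mu>) = 1"
    and \<beta>_pos: "\<And>r. r > 0 \<Longrightarrow> \<beta> r > 0"
    and super_poincare: "\<And>r f. r > 0 \<Longrightarrow> f \<in> form_dom \<mu> q \<mu> \<Longrightarrow>
      (\<integral> x. (f x)\<^sup>2 \<partial>\<mu>) \<le> r * form_val \<mu> q \<mu> f + \<beta> r * (\<integral> x. \<bar>f x\<bar> \<partial>\<mu>)\<^sup>2"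
    and \<kappa>1_pos: "\<kappa>1 > 0"
    and integrable_exp_minus_2V: "integrable \<mu> (\<lambda>x. exp (- 2 * V x))"
    and V_lipschitz: "\<And>x y. q x y > 0 \<Longrightarrow> \<bar>V x - V y\<bar> \<le> \<kappa>1 * min 1 (dist x y)"
begin

abbreviation "\<mu>V \<equiv> density \<mu> (\<lambda>x. ennreal (exp (V x)))"

lemma V_measurable_\<mu> [measurable]: "V \<in> borel_measurable \<mu>"
  using V_measurable measurable_\<mu>_iff by blast

lemma dist_measurable [measurable]: "(\<lambda>y. dist x y) \<in> borel_measurable \<mu>"
  by (intro measurable_\<mu>_iff[THEN iffD2] borel_measurable_continuous_onI continuous_intros)

lemma sets_\<mu>V: "sets \<mu>V = sets borel"
  using sets_\<mu> by simp

lemma prob_space_\<mu>V: "prob_space \<mu>V"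
proof (rule prob_spaceI)
  have "emeasure \<mu>V (space \<mu>V) = (\<integral>\<^sup>+ x. ennreal (exp (V x)) * indicator (space \<mu>) x \<partial>\<mu>)"
    unfolding space_density by (rule emeasure_density) auto
  also have "\<dots> = (\<integral>\<^sup>+ x. ennreal (exp (V x)) \<partial>\<mu>)"
    by (rule nn_integral_cong) simp
  also have "\<dots> = ennreal (\<integral> x. exp (V x) \<partial>\<mu>)"
    using integrable_exp_V by (intro nn_integral_eq_integral) auto
  finally show "emeasure \<mu>V (space \<mu>V) = 1" using integral_exp_V by simp
qed

lemma integral_\<mu>V:
  assumes "f \<in> borel_measurable borel"
  shows "(\<integral> x. f x \<partial>\<mu>V) = (\<integral> x. exp (V x) * f x \<partial>\<mu>)"
  using assms measurable_\<mu>_iff by (subst integral_density) auto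

lemma integrable_exp_V_mult:
  assumes "f \<in> borel_measurable \<mu>" "\<And>x. \<bar>f x\<bar> \<le> C"
  shows "integrable \<mu> (\<lambda>x. exp (V x) * f x)"
  by (rule integrable_mult_bounded[OF integrable_exp_V assms])

lemma
  shows integrable_jump_scale: "integrable \<mu> (\<lambda>y. min 1 ((dist x y)\<^sup>2) * q x y)"
    and integral_jump_scale_le: "(\<integral> y. min 1 ((dist x y)\<^sup>2) * q x y \<partial>\<mu>) \<le> jump_lambda \<mu> q"
    and jump_lambda_nonneg: "0 \<le> jump_lambda \<mu> q"
proof -
  obtain C where C: "\<And>x. (\<integral>\<^sup>+ y. ennreal (min 1 ((dist x y)\<^sup>2) * q x y) \<partial>\<mu>) \<le> ennreal C"
    using jump_scale_bounded by blast
  have nonneg: "0 \<le> min 1 ((dist x y)\<^sup>2) * q x y" for x y by (simp add: q_nonneg)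
  have int: "integrable \<mu> (\<lambda>y. min 1 ((dist x y)\<^sup>2) * q x y)" for x
    by (rule integrableI_nonneg) (auto intro!: nonneg le_less_trans[OF C])
  then show "integrable \<mu> (\<lambda>y. min 1 ((dist x y)\<^sup>2) * q x y)" .
  define I where "I x = (\<integral> y. min 1 ((dist x y)\<^sup>2) * q x y \<partial>\<mu>)" for x
  have I_nonneg: "0 \<le> I x" for x unfolding I_def by (auto intro!: integral_nonneg_AE nonneg)
  have ennreal_I: "(\<integral>\<^sup>+ y. ennreal (min 1 ((dist x y)\<^sup>2) * q x y) \<partial>\<mu>) = ennreal (I x)" for x
    unfolding I_def using int[of x] by (intro nn_integral_eq_integral) (auto intro!: nonneg)
  have "I x \<le> max C 0" for x
    using C[of x] unfolding ennreal_I by (metis ennreal_le_iff2 I_nonneg max.cobounded1 max.cobounded2 order_trans ennreal_le_iff)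
  then have "bdd_above (range I)" by (intro bdd_aboveI2[where M="max C 0"])
  moreover have "jump_lambda \<mu> q = (SUP x. I x)"
    unfolding jump_lambda_def ennreal_I using I_nonneg by simp
  ultimately show "I x \<le> jump_lambda \<mu> q" by (simp add: cSUP_upper)
  then show "0 \<le> jump_lambda \<mu> q" using I_nonneg[of x] by linarith
qed

text \<open>Testing the super Poincar\'e inequality with \<open>f = 1\<close>.\<close>
lemma one_le_\<beta>:
  assumes "r > 0"
  shows "1 \<le> \<beta> r"
proof -
  interpret prob_space \<mu> by (rule prob_\<mu>)
  have "(\<integral> x. ((\<lambda>x. 1::real) x)\<^sup>2 \<partial>\<mu>) \<le> r * form_val \<mu> q \<mu> (\<lambda>x. 1) + \<beta> r * (\<integral> x. \<bar>(\<lambda>x. 1::real) x\<bar> \<partial>\<mu>)\<^sup>2"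
    by (rule super_poincare[OF assms subsetD[OF algA_subset_form_dom algA_const]])
  then show ?thesis
    using form_val_eq_energy[OF algA_const, of 1] energy_const[of \<mu> 1] by (simp add: prob_space)
qed

lemma integrable_exp_minus_V: "integrable \<mu> (\<lambda>x. exp (- V x))"
proof (rule Bochner_Integration.integrable_bound[of \<mu> "\<lambda>x. 1 + exp (- 2 * V x)"])
  interpret prob_space \<mu> by (rule prob_\<mu>)
  show "integrable \<mu> (\<lambda>x. 1 + exp (- 2 * V x))" using integrable_exp_minus_2V by simp
  have "exp (- V x) \<le> 1 + (exp (- V x))\<^sup>2" for x
    using sum_squares_ge_zero[of 0 "exp (- V x) - 1/2"] by (simp add: power2_eq_square algebra_simps)
  then show "AE x in \<mu>. norm (exp (- V x)) \<le> norm (1 + exp (- 2 * V x))"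
    by (simp add: power2_eq_square flip: exp_add)
qed simp

lemma one_le_integral_exp_minus_V: "1 \<le> (\<integral> x. exp (- V x) \<partial>\<mu>)"
proof -
  interpret prob_space \<mu> by (rule prob_\<mu>)
  have "(\<integral> x. sqrt (exp (V x)) * sqrt (exp (- V x)) \<partial>\<mu>)\<^sup>2
      \<le> (\<integral> x. exp (V x) \<partial>\<mu>) * (\<integral> x. exp (- V x) \<partial>\<mu>)"
    by (rule Cauchy_Schwarz_integral_sqrt[OF integrable_exp_V _ integrable_exp_minus_V]) auto
  moreover have "sqrt (exp (V x)) * sqrt (exp (- V x)) = 1" for x
    by (simp add: real_sqrt_mult[symmetric] exp_minus_inverse)
  ultimately show ?thesis using integral_exp_V by (simp add: prob_space)
qed

lemma integral_exp_minus_V_square_le: "(\<integral> x. exp (- V x) \<partial>\<mu>)\<^sup>2 \<le> (\<integral> x. exp (- 2 * V x) \<partial>\<mu>)"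
proof -
  interpret prob_space \<mu> by (rule prob_\<mu>)
  have square: "(exp (- V x))\<^sup>2 = exp (- 2 * V x)" for x
    by (simp add: power2_eq_square flip: exp_add)
  have "0 \<le> variance (\<lambda>x. exp (- V x))" by (rule variance_positive)
  also have "\<dots> = (\<integral> x. exp (- 2 * V x) \<partial>\<mu>) - (\<integral> x. exp (- V x) \<partial>\<mu>)\<^sup>2"
    using integrable_exp_minus_V integrable_exp_minus_2V by (subst variance_eq) (simp_all add: square)
  finally show ?thesis by simp
qed

lemma exp_V_le_of_jump:
  assumes "q x y > 0"
  shows "exp (V y) \<le> exp \<kappa>1 * exp (V x)"
proof -
  have "\<bar>V x - V y\<bar> \<le> \<kappa>1 * min 1 (dist x y)" by (rule V_lipschitz[OF assms])
  also have "\<dots> \<le> \<kappa>1" using \<kappa>1_pos by (simp add: mult_le_cancel_left1)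
  finally show ?thesis by (simp flip: exp_add)
qed

text \<open>\<open>h\<close> times the square root of the density \<open>e\<^sup>V\<close> truncated at level \<open>e\<^sup>n\<close>: the truncation
  keeps it bounded, hence in \<open>A\<close>.\<close>
definition tilt :: "nat \<Rightarrow> ('a \<Rightarrow> real) \<Rightarrow> 'a \<Rightarrow> real" where
  "tilt n h x = h x * exp (min (V x) (real n) / 2)"

lemma tilt_measurable:
  assumes "h \<in> algA \<mu> q"
  shows "tilt n h \<in> borel_measurable borel"
  unfolding tilt_def[abs_def] using algA_memD(1)[OF assms] V_measurable by measurable

lemma tilt_square: "(tilt n h x)\<^sup>2 = exp (min (V x) (real n)) * (h x)\<^sup>2"
  by (simp add: tilt_def power_mult_distrib exp_double[symmetric])

lemma tilt_diff_square_le: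
  assumes "q x y > 0"
  shows "(tilt n h x - tilt n h y)\<^sup>2 \<le> 2 * exp (min (V y) (real n)) * (h x - h y)\<^sup>2
    + 2 * (h x)\<^sup>2 * (exp (min (V x) (real n)) * (exp \<kappa>1 * (\<kappa>1\<^sup>2 / 4 * min 1 ((dist x y)\<^sup>2))))"
proof -
  define px py where "px = exp (min (V x) (real n) / 2)" and "py = exp (min (V y) (real n) / 2)"
  define u where "u = \<kappa>1 * min 1 (dist x y)"
  have "tilt n h x - tilt n h y = py * (h x - h y) + h x * (px - py)"
    by (simp add: tilt_def px_def py_def algebra_simps)
  then have split: "(tilt n h x - tilt n h y)\<^sup>2 \<le> 2 * (py * (h x - h y))\<^sup>2 + 2 * (h x * (px - py))\<^sup>2"
    by (simp only: square_add_le)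
  have "\<bar>min (V x) (real n) - min (V y) (real n)\<bar> \<le> u"
    using V_lipschitz[OF assms] unfolding u_def by linarith
  then have "(px - py)\<^sup>2 \<le> exp (min (V x) (real n)) * (exp u * (u / 2)\<^sup>2)"
    unfolding px_def py_def by (rule exp_half_diff_square_le)
  also have "exp u * (u / 2)\<^sup>2 \<le> exp \<kappa>1 * (u / 2)\<^sup>2"
    using \<kappa>1_pos by (intro mult_right_mono) (auto simp: u_def mult_le_cancel_left1)
  also have "(u / 2)\<^sup>2 = \<kappa>1\<^sup>2 / 4 * min 1 ((dist x y)\<^sup>2)"
    unfolding u_def using power2_min_one[of "dist x y"] by (simp add: power2_eq_square field_simps)
  finally have "(h x)\<^sup>2 * (px - py)\<^sup>2 \<le>
      (h x)\<^sup>2 * (exp (min (V x) (real n)) * (exp \<kappa>1 * (\<kappa>1\<^sup>2 / 4 * min 1 ((dist x y)\<^sup>2))))"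
    by (intro mult_left_mono) auto
  moreover have "(py * (h x - h y))\<^sup>2 = exp (min (V y) (real n)) * (h x - h y)\<^sup>2"
    by (simp add: py_def power_mult_distrib exp_double[symmetric])
  moreover have "(h x * (px - py))\<^sup>2 = (h x)\<^sup>2 * (px - py)\<^sup>2" by (simp add: power_mult_distrib)
  ultimately show ?thesis using split by linarith
qed

lemma tilt_jump_integrand_le_uniform:
  assumes C: "\<And>x. \<bar>h x\<bar> \<le> C"
  shows "(tilt n h x - tilt n h y)\<^sup>2 * q x y \<le> 2 * exp (real n) * ((h x - h y)\<^sup>2 * q x y)
    + 2 * C\<^sup>2 * exp (real n) * exp \<kappa>1 * \<kappa>1\<^sup>2 / 4 * (min 1 ((dist x y)\<^sup>2) * q x y)"
proof (cases "q x y > 0")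
  case True
  have "(h x)\<^sup>2 \<le> C\<^sup>2" using power_mono[OF C[of x] abs_ge_zero, of 2] by simp
  have "2 * exp (min (V y) (real n)) * (h x - h y)\<^sup>2 \<le> 2 * exp (real n) * (h x - h y)\<^sup>2"
    by (intro mult_right_mono) auto
  moreover have "2 * (h x)\<^sup>2 * (exp (min (V x) (real n)) * (exp \<kappa>1 * (\<kappa>1\<^sup>2 / 4 * min 1 ((dist x y)\<^sup>2))))
      \<le> 2 * C\<^sup>2 * (exp (real n) * (exp \<kappa>1 * (\<kappa>1\<^sup>2 / 4 * min 1 ((dist x y)\<^sup>2))))"
    using \<open>(h x)\<^sup>2 \<le> C\<^sup>2\<close> by (intro mult_mono mult_right_mono) auto
  moreover have "2 * C\<^sup>2 * (exp (real n) * (exp \<kappa>1 * (\<kappa>1\<^sup>2 / 4 * min 1 ((dist x y)\<^sup>2))))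
      = 2 * C\<^sup>2 * exp (real n) * exp \<kappa>1 * \<kappa>1\<^sup>2 / 4 * min 1 ((dist x y)\<^sup>2)"
    by (simp add: algebra_simps)
  ultimately have "(tilt n h x - tilt n h y)\<^sup>2 \<le> 2 * exp (real n) * (h x - h y)\<^sup>2
      + 2 * C\<^sup>2 * exp (real n) * exp \<kappa>1 * \<kappa>1\<^sup>2 / 4 * min 1 ((dist x y)\<^sup>2)"
    using tilt_diff_square_le[OF True, of n h] by linarith
  then have "(tilt n h x - tilt n h y)\<^sup>2 * q x y \<le> (2 * exp (real n) * (h x - h y)\<^sup>2
      + 2 * C\<^sup>2 * exp (real n) * exp \<kappa>1 * \<kappa>1\<^sup>2 / 4 * min 1 ((dist x y)\<^sup>2)) * q x y"
    by (rule mult_right_mono) (rule q_nonneg)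
  then show ?thesis by (simp add: algebra_simps)
qed (use q_nonneg[of x y] in simp)

lemma tilt_in_algA:
  assumes h: "h \<in> algA \<mu> q"
  shows "tilt n h \<in> algA \<mu> q"
proof -
  obtain C where C: "\<And>x. \<bar>h x\<bar> \<le> C" using algA_memD(3)[OF h] by blast
  obtain CF where CF: "0 \<le> CF" "\<And>x. (\<integral>\<^sup>+ y. ennreal ((h x - h y)\<^sup>2 * q x y) \<partial>\<mu>) \<le> ennreal CF"
    using algA_jump_bound[OF h] by blast
  obtain CG0 where CG0: "\<And>x. (\<integral>\<^sup>+ y. ennreal (min 1 ((dist x y)\<^sup>2) * q x y) \<partial>\<mu>) \<le> ennreal CG0"
    using jump_scale_bounded by blast
  define CG where "CG = max CG0 0"
  have CG: "(\<integral>\<^sup>+ y. ennreal (min 1 ((dist x y)\<^sup>2) * q x y) \<partial>\<mu>) \<le> ennreal CG" for x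
    using CG0[of x] unfolding CG_def by (meson ennreal_leI max.cobounded1 order_trans)
  define A B where "A = 2 * exp (real n)" and "B = 2 * C\<^sup>2 * exp (real n) * exp \<kappa>1 * \<kappa>1\<^sup>2 / 4"
  have "(\<integral>\<^sup>+ y. ennreal ((tilt n h x - tilt n h y)\<^sup>2 * q x y) \<partial>\<mu>) \<le> ennreal (A * CF + B * CG)" for x
  proof -
    have [measurable]: "h \<in> borel_measurable \<mu>" by (rule algA_memD(2)[OF h])
    have "(\<integral>\<^sup>+ y. ennreal ((tilt n h x - tilt n h y)\<^sup>2 * q x y) \<partial>\<mu>) \<le>
        (\<integral>\<^sup>+ y. ennreal (A * ((h x - h y)\<^sup>2 * q x y) + B * (min 1 ((dist x y)\<^sup>2) * q x y)) \<partial>\<mu>)"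
      unfolding A_def B_def by (intro nn_integral_mono ennreal_leI tilt_jump_integrand_le_uniform C)
    also have "\<dots> \<le> ennreal (A * CF + B * CG)"
      by (rule nn_integral_lincomb_le) (use CF CG in \<open>auto simp: A_def B_def CG_def q_nonneg\<close>)
    finally show ?thesis .
  qed
  moreover have "\<bar>tilt n h x\<bar> \<le> C * exp (real n / 2)" for x
    unfolding tilt_def abs_mult using C[of x] by (intro mult_mono) auto
  ultimately show ?thesis
    unfolding algA_def using tilt_measurable[OF h] measurable_\<mu>_iff by blast
qed

lemma tilt_jump_integrand_le:
  "(tilt n h x - tilt n h y)\<^sup>2 * q x y \<le> 2 * exp \<kappa>1 * exp (V x) * ((h x - h y)\<^sup>2 * q x y)
    + exp \<kappa>1 * \<kappa>1\<^sup>2 / 2 * (h x)\<^sup>2 * exp (V x) * (min 1 ((dist x y)\<^sup>2) * q x y)"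
proof (cases "q x y > 0")
  case True
  have "exp (min (V y) (real n)) \<le> exp \<kappa>1 * exp (V x)"
    using exp_V_le_of_jump[OF True] by (meson exp_le_cancel_iff min.cobounded1 order_trans)
  then have "2 * exp (min (V y) (real n)) * (h x - h y)\<^sup>2 \<le> 2 * exp \<kappa>1 * exp (V x) * (h x - h y)\<^sup>2"
    by (intro mult_right_mono) auto
  moreover have "2 * (h x)\<^sup>2 * (exp (min (V x) (real n)) * (exp \<kappa>1 * (\<kappa>1\<^sup>2 / 4 * min 1 ((dist x y)\<^sup>2))))
      \<le> 2 * (h x)\<^sup>2 * (exp (V x) * (exp \<kappa>1 * (\<kappa>1\<^sup>2 / 4 * min 1 ((dist x y)\<^sup>2))))"
    by (intro mult_left_mono mult_right_mono) auto
  moreover have "2 * (h x)\<^sup>2 * (exp (V x) * (exp \<kappa>1 * (\<kappa>1\<^sup>2 / 4 * min 1 ((dist x y)\<^sup>2))))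
      = exp \<kappa>1 * \<kappa>1\<^sup>2 / 2 * (h x)\<^sup>2 * exp (V x) * min 1 ((dist x y)\<^sup>2)"
    by (simp add: algebra_simps)
  ultimately have "(tilt n h x - tilt n h y)\<^sup>2 \<le> 2 * exp \<kappa>1 * exp (V x) * (h x - h y)\<^sup>2
      + exp \<kappa>1 * \<kappa>1\<^sup>2 / 2 * (h x)\<^sup>2 * exp (V x) * min 1 ((dist x y)\<^sup>2)"
    using tilt_diff_square_le[OF True, of n h] by linarith
  then have "(tilt n h x - tilt n h y)\<^sup>2 * q x y \<le> (2 * exp \<kappa>1 * exp (V x) * (h x - h y)\<^sup>2
      + exp \<kappa>1 * \<kappa>1\<^sup>2 / 2 * (h x)\<^sup>2 * exp (V x) * min 1 ((dist x y)\<^sup>2)) * q x y"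
    by (rule mult_right_mono) (rule q_nonneg)
  then show ?thesis by (simp add: algebra_simps)
qed (use q_nonneg[of x y] in simp)

lemma Gamma_tilt_le:
  assumes h: "h \<in> algA \<mu> q"
  shows "Gamma \<mu> q (tilt n h) (tilt n h) x
    \<le> 2 * exp \<kappa>1 * (exp (V x) * Gamma \<mu> q h h x)
      + exp \<kappa>1 * (jump_lambda \<mu> q * \<kappa>1\<^sup>2) / 2 * (exp (V x) * (h x)\<^sup>2)"
proof -
  define c1 c2 where "c1 = 2 * exp \<kappa>1 * exp (V x)" and "c2 = exp \<kappa>1 * \<kappa>1\<^sup>2 / 2 * (h x)\<^sup>2 * exp (V x)"
  have "c2 \<ge> 0" by (simp add: c2_def)
  have "Gamma \<mu> q (tilt n h) (tilt n h) x
      \<le> (\<integral> y. c1 * ((h x - h y)\<^sup>2 * q x y) + c2 * (min 1 ((dist x y)\<^sup>2) * q x y) \<partial>\<mu>)"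
    unfolding Gamma_diag c1_def c2_def
    using integrable_jump_integrand[OF tilt_in_algA[OF h], of n x] integrable_jump_integrand[OF h, of x]
      integrable_jump_scale[of x]
    by (intro integral_mono tilt_jump_integrand_le) auto
  also have "\<dots> = c1 * Gamma \<mu> q h h x + c2 * (\<integral> y. min 1 ((dist x y)\<^sup>2) * q x y \<partial>\<mu>)"
    unfolding Gamma_diag using integrable_jump_integrand[OF h, of x] integrable_jump_scale[of x] by simp
  also have "\<dots> \<le> c1 * Gamma \<mu> q h h x + c2 * jump_lambda \<mu> q"
    using integral_jump_scale_le[of x] \<open>c2 \<ge> 0\<close> by (intro add_left_mono mult_left_mono)
  finally show ?thesis unfolding c1_def c2_def by (simp add: algebra_simps)
qed

lemma energy_tilt_le:
  assumes h: "h \<in> algA \<mu> q"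
  shows "energy \<mu> q \<mu> (tilt n h)
    \<le> 2 * exp \<kappa>1 * energy \<mu> q \<mu>V h + exp \<kappa>1 * (jump_lambda \<mu> q * \<kappa>1\<^sup>2) / 2 * (\<integral> x. (h x)\<^sup>2 \<partial>\<mu>V)"
proof -
  interpret prob_space \<mu> by (rule prob_\<mu>)
  obtain C where C: "\<And>x. \<bar>(h x)\<^sup>2\<bar> \<le> C" using algA_square_bounded[OF h] by blast
  obtain CG where CG: "\<And>x. Gamma \<mu> q h h x \<le> CG" using Gamma_bounded[OF h] by blast
  have [measurable]: "h \<in> borel_measurable \<mu>" "Gamma \<mu> q h h \<in> borel_measurable \<mu>"
    using algA_memD(2)[OF h] Gamma_measurable[OF sets_\<mu> algA_memD(1)[OF h]] by auto
  have int_Gamma: "integrable \<mu> (\<lambda>x. exp (V x) * Gamma \<mu> q h h x)"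
    by (rule integrable_exp_V_mult[of _ CG]) (use CG Gamma_nonneg in \<open>auto simp: abs_of_nonneg\<close>)
  have int_square: "integrable \<mu> (\<lambda>x. exp (V x) * (h x)\<^sup>2)"
    by (rule integrable_exp_V_mult[OF _ C]) simp
  have "energy \<mu> q \<mu> (tilt n h) \<le> (\<integral> x. 2 * exp \<kappa>1 * (exp (V x) * Gamma \<mu> q h h x)
      + exp \<kappa>1 * (jump_lambda \<mu> q * \<kappa>1\<^sup>2) / 2 * (exp (V x) * (h x)\<^sup>2) \<partial>\<mu>)"
    unfolding energy_def
    using integrable_Gamma[OF sets_\<mu> finite_measure_axioms tilt_in_algA[OF h]] int_Gamma int_square
    by (intro integral_mono Gamma_tilt_le[OF h]) auto
  also have "\<dots> = 2 * exp \<kappa>1 * energy \<mu> q \<mu>V h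
      + exp \<kappa>1 * (jump_lambda \<mu> q * \<kappa>1\<^sup>2) / 2 * (\<integral> x. (h x)\<^sup>2 \<partial>\<mu>V)"
    unfolding energy_def
    using int_Gamma int_square Gamma_measurable[OF refl algA_memD(1)[OF h]] algA_memD(1)[OF h]
    by (simp add: integral_\<mu>V)
  finally show ?thesis .
qed

lemma integrable_abs_sqrt_density:
  assumes h: "h \<in> algA \<mu> q"
  shows "integrable \<mu> (\<lambda>x. \<bar>h x\<bar> * exp (V x / 2))"
proof -
  obtain C where C: "\<And>x. \<bar>h x\<bar> \<le> C" using algA_memD(3)[OF h] by blast
  have "0 \<le> C" using order_trans[OF abs_ge_zero C] .
  have [measurable]: "h \<in> borel_measurable \<mu>" by (rule algA_memD(2)[OF h])
  have "exp (V x / 2) \<le> 1 + exp (V x)" for x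
  proof -
    have "exp (V x / 2) \<le> 1 + (exp (V x / 2))\<^sup>2"
      using sum_squares_ge_zero[of 0 "exp (V x / 2) - 1/2"] by (simp add: power2_eq_square algebra_simps)
    then show ?thesis by (simp add: exp_double[symmetric])
  qed
  then have bound: "\<bar>h x\<bar> * exp (V x / 2) \<le> C * (1 + exp (V x))" for x
    using C[of x] by (intro mult_mono) auto
  have "norm (\<bar>h x\<bar> * exp (V x / 2)) \<le> norm (C * (1 + exp (V x)))" for x
    using order_trans[OF bound[of x] abs_ge_self] by (simp add: abs_mult)
  then have "AE x in \<mu>. norm (\<bar>h x\<bar> * exp (V x / 2)) \<le> norm (C * (1 + exp (V x)))" by simp
  moreover have "integrable \<mu> (\<lambda>x. C * (1 + exp (V x)))"
    using integrable_exp_V prob_space.finite_measure[OF prob_\<mu>]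
    by (simp add: finite_measure.integrable_const)
  ultimately show ?thesis
    by (rule Bochner_Integration.integrable_bound[rotated 2]) measurable
qed

lemma integral_abs_tilt_le:
  assumes h: "h \<in> algA \<mu> q"
  shows "(\<integral> x. \<bar>tilt n h x\<bar> \<partial>\<mu>) \<le> (\<integral> x. \<bar>h x\<bar> * exp (V x / 2) \<partial>\<mu>)"
proof (rule integral_mono[OF _ integrable_abs_sqrt_density[OF h]])
  have "tilt n h \<in> borel_measurable \<mu>" using tilt_measurable[OF h] measurable_\<mu>_iff by blast
  then show "integrable \<mu> (\<lambda>x. \<bar>tilt n h x\<bar>)"
    using integrable_square_algA[OF prob_space.finite_measure[OF prob_\<mu>] sets_\<mu> tilt_in_algA[OF h]]
      finite_measure.square_integrable_imp_integrable[OF prob_space.finite_measure[OF prob_\<mu>]]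
    by auto
  show "\<bar>tilt n h x\<bar> \<le> \<bar>h x\<bar> * exp (V x / 2)" for x
    by (simp add: tilt_def abs_mult mult_left_mono)
qed

lemma tendsto_integral_square_tilt:
  assumes h: "h \<in> algA \<mu> q"
  shows "(\<lambda>n. \<integral> x. (tilt n h x)\<^sup>2 \<partial>\<mu>) \<longlonglongrightarrow> (\<integral> x. (h x)\<^sup>2 \<partial>\<mu>V)"
proof -
  obtain C where C: "\<And>x. \<bar>(h x)\<^sup>2\<bar> \<le> C" using algA_square_bounded[OF h] by blast
  have [measurable]: "h \<in> borel_measurable \<mu>" by (rule algA_memD(2)[OF h])
  have "(\<lambda>n. \<integral> x. (tilt n h x)\<^sup>2 \<partial>\<mu>) \<longlonglongrightarrow> (\<integral> x. exp (V x) * (h x)\<^sup>2 \<partial>\<mu>)"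
  proof (rule integral_dominated_convergence[where w="\<lambda>x. exp (V x) * (h x)\<^sup>2"])
    show "integrable \<mu> (\<lambda>x. exp (V x) * (h x)\<^sup>2)"
      by (rule integrable_exp_V_mult[OF _ C]) simp
    show "(\<lambda>x. (tilt n h x)\<^sup>2) \<in> borel_measurable \<mu>" for n
      unfolding tilt_square by measurable
    show "AE x in \<mu>. (\<lambda>n. (tilt n h x)\<^sup>2) \<longlonglongrightarrow> exp (V x) * (h x)\<^sup>2"
    proof (rule AE_I2)
      fix x
      have "eventually (\<lambda>n. (tilt n h x)\<^sup>2 = exp (V x) * (h x)\<^sup>2) sequentially"
        using eventually_ge_at_top[of "nat \<lceil>V x\<rceil>"]
        by eventually_elim (simp add: tilt_square min_def real_nat_ceiling_ge le_nat_iff ceiling_le_iff)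
      then show "(\<lambda>n. (tilt n h x)\<^sup>2) \<longlonglongrightarrow> exp (V x) * (h x)\<^sup>2" by (rule tendsto_eventually)
    qed
    show "AE x in \<mu>. norm ((tilt n h x)\<^sup>2) \<le> exp (V x) * (h x)\<^sup>2" for n
      by (rule AE_I2) (simp add: tilt_square mult_right_mono)
  qed simp
  then show ?thesis using algA_memD(1)[OF h] by (simp add: integral_\<mu>V)
qed

lemma weighted_bound_algA:
  assumes h: "h \<in> algA \<mu> q" and "r > 0"
  shows "(\<integral> x. (h x)\<^sup>2 \<partial>\<mu>V)
    \<le> r * (2 * exp \<kappa>1 * energy \<mu> q \<mu>V h
          + exp \<kappa>1 * (jump_lambda \<mu> q * \<kappa>1\<^sup>2) / 2 * (\<integral> x. (h x)\<^sup>2 \<partial>\<mu>V))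
      + \<beta> r * (\<integral> x. \<bar>h x\<bar> * exp (V x / 2) \<partial>\<mu>)\<^sup>2"
proof (rule LIMSEQ_le_const2[OF tendsto_integral_square_tilt[OF h]], intro exI allI impI)
  fix n :: nat
  have "(\<integral> x. (tilt n h x)\<^sup>2 \<partial>\<mu>) \<le> r * energy \<mu> q \<mu> (tilt n h) + \<beta> r * (\<integral> x. \<bar>tilt n h x\<bar> \<partial>\<mu>)\<^sup>2"
    using super_poincare[OF \<open>r > 0\<close> subsetD[OF algA_subset_form_dom tilt_in_algA[OF h]]]
    by (simp add: form_val_eq_energy[OF tilt_in_algA[OF h]])
  also have "\<dots> \<le> r * (2 * exp \<kappa>1 * energy \<mu> q \<mu>V h
          + exp \<kappa>1 * (jump_lambda \<mu> q * \<kappa>1\<^sup>2) / 2 * (\<integral> x. (h x)\<^sup>2 \<partial>\<mu>V))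
      + \<beta> r * (\<integral> x. \<bar>h x\<bar> * exp (V x / 2) \<partial>\<mu>)\<^sup>2"
    using \<open>r > 0\<close> \<beta>_pos[OF \<open>r > 0\<close>] energy_tilt_le[OF h, of n] integral_abs_tilt_le[OF h, of n]
    by (intro add_mono mult_left_mono power_mono) auto
  finally show "(\<integral> x. (tilt n h x)\<^sup>2 \<partial>\<mu>) \<le> \<dots>" .
qed

lemma integral_abs_sqrt_density_square_le:
  assumes h: "h \<in> algA \<mu> q"
  shows "(\<integral> x. \<bar>h x\<bar> * exp (V x / 2) \<partial>\<mu>)\<^sup>2 \<le> (\<integral> x. \<bar>h x\<bar> \<partial>\<mu>V) * (\<integral> x. \<bar>h x\<bar> \<partial>\<mu>)"
proof -
  obtain C where C: "\<And>x. \<bar>h x\<bar> \<le> C" using algA_memD(3)[OF h] by blast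
  have [measurable]: "h \<in> borel_measurable \<mu>" by (rule algA_memD(2)[OF h])
  have "sqrt (exp (V x) * \<bar>h x\<bar>) * sqrt \<bar>h x\<bar> = \<bar>h x\<bar> * exp (V x / 2)" for x
  proof -
    have "sqrt (exp (V x) * \<bar>h x\<bar>) * sqrt \<bar>h x\<bar> = sqrt (exp (V x)) * (sqrt \<bar>h x\<bar> * sqrt \<bar>h x\<bar>)"
      by (simp add: real_sqrt_mult)
    also have "sqrt (exp (V x)) = sqrt ((exp (V x / 2))\<^sup>2)" by (simp add: exp_double[symmetric])
    finally show ?thesis by simp
  qed
  moreover have "(\<integral> x. sqrt (exp (V x) * \<bar>h x\<bar>) * sqrt \<bar>h x\<bar> \<partial>\<mu>)\<^sup>2
      \<le> (\<integral> x. exp (V x) * \<bar>h x\<bar> \<partial>\<mu>) * (\<integral> x. \<bar>h x\<bar> \<partial>\<mu>)"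
    using C prob_space.finite_measure[OF prob_\<mu>]
    by (intro Cauchy_Schwarz_integral_sqrt integrable_exp_V_mult[of _ C])
      (auto intro: finite_measure.integrable_const_bound[where B=C])
  ultimately show ?thesis
    using algA_memD(1)[OF h] by (simp add: integral_\<mu>V)
qed

lemma integral_abs_square_le:
  assumes h: "h \<in> algA \<mu> q"
  shows "(\<integral> x. \<bar>h x\<bar> \<partial>\<mu>)\<^sup>2 \<le> (\<integral> x. (h x)\<^sup>2 \<partial>\<mu>V) * (\<integral> x. exp (- V x) \<partial>\<mu>)"
proof -
  obtain C where C: "\<And>x. \<bar>(h x)\<^sup>2\<bar> \<le> C" using algA_square_bounded[OF h] by blast
  have [measurable]: "h \<in> borel_measurable \<mu>" by (rule algA_memD(2)[OF h])
  have "sqrt (exp (V x) * (h x)\<^sup>2) * sqrt (exp (- V x)) = \<bar>h x\<bar>" for x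
  proof -
    have "sqrt (exp (V x) * (h x)\<^sup>2) * sqrt (exp (- V x)) = sqrt ((exp (V x) * exp (- V x)) * (h x)\<^sup>2)"
      by (simp add: real_sqrt_mult)
    also have "exp (V x) * exp (- V x) = 1" by (simp flip: exp_add)
    finally show ?thesis by simp
  qed
  moreover have "(\<integral> x. sqrt (exp (V x) * (h x)\<^sup>2) * sqrt (exp (- V x)) \<partial>\<mu>)\<^sup>2
      \<le> (\<integral> x. exp (V x) * (h x)\<^sup>2 \<partial>\<mu>) * (\<integral> x. exp (- V x) \<partial>\<mu>)"
    by (intro Cauchy_Schwarz_integral_sqrt integrable_exp_V_mult[OF _ C] integrable_exp_minus_V) auto
  ultimately show ?thesis
    using algA_memD(1)[OF h] by (simp add: integral_\<mu>V)
qed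

lemma super_poincare_weighted_algA:
  assumes h: "h \<in> algA \<mu> q" and "0 < s'" "s' \<le> s" "0 < r"
    and r_le: "r \<le> s' * exp (- \<kappa>1) / (4 + jump_lambda \<mu> q * \<kappa>1\<^sup>2 * s')"
  shows "(\<integral> x. (h x)\<^sup>2 \<partial>\<mu>V) \<le> s * energy \<mu> q \<mu>V h
    + 16 * (\<integral> x. exp (- 2 * V x) \<partial>\<mu>) * (\<beta> r)^3 * (4 + jump_lambda \<mu> q * \<kappa>1\<^sup>2 * s')
      * (\<integral> x. \<bar>h x\<bar> \<partial>\<mu>V)\<^sup>2"
proof -
  define a b m k L where "a = (\<integral> x. (h x)\<^sup>2 \<partial>\<mu>V)" and "b = (\<integral> x. \<bar>h x\<bar> \<partial>\<mu>V)"
    and "m = (\<integral> x. \<bar>h x\<bar> * exp (V x / 2) \<partial>\<mu>)" and "k = (\<integral> x. exp (- V x) \<partial>\<mu>)"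
    and "L = jump_lambda \<mu> q * \<kappa>1\<^sup>2"
  have "0 \<le> L" unfolding L_def using jump_lambda_nonneg by simp
  have "1 \<le> k" unfolding k_def by (rule one_le_integral_exp_minus_V)
  have "1 \<le> \<beta> r" by (rule one_le_\<beta>[OF \<open>0 < r\<close>])
  have D: "0 < 4 + L * s'" using \<open>0 \<le> L\<close> \<open>0 < s'\<close> by (simp add: add_pos_nonneg)
  have "r * (4 + L * s') \<le> s' * exp (- \<kappa>1)"
    using r_le D by (simp add: L_def pos_le_divide_eq mult.assoc)
  then have "r * (4 + L * s') * exp \<kappa>1 \<le> s' * exp (- \<kappa>1) * exp \<kappa>1" by (simp add: mult_right_mono)
  then have r_le': "r * exp \<kappa>1 * (4 + L * s') \<le> s'" by (simp add: mult_ac flip: exp_add)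
  have main: "a \<le> r * (2 * exp \<kappa>1 * energy \<mu> q \<mu>V h + exp \<kappa>1 * L / 2 * a) + \<beta> r * m\<^sup>2"
    using weighted_bound_algA[OF h \<open>0 < r\<close>] unfolding a_def m_def L_def .
  have am_gm: "2 * \<beta> r * m\<^sup>2 \<le> a + (\<beta> r)\<^sup>2 * b\<^sup>2 * k"
    using integral_abs_sqrt_density_square_le[OF h] integral_abs_square_le[OF h] \<open>1 \<le> k\<close> \<open>1 \<le> \<beta> r\<close>
    unfolding a_def b_def m_def k_def by (intro weighted_am_gm) auto
  have "a \<le> s * energy \<mu> q \<mu>V h + (\<beta> r)\<^sup>2 * b\<^sup>2 * k * (4 + L * s') / 4"
    using \<open>1 \<le> k\<close> by (intro absorb_zero_order_term[OF energy_nonneg \<open>0 \<le> L\<close> \<open>0 < r\<close> exp_gt_zero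
        \<open>0 < s'\<close> \<open>s' \<le> s\<close> _ r_le' main am_gm]) simp
  also have "\<dots> \<le> s * energy \<mu> q \<mu>V h + 16 * (\<integral> x. exp (- 2 * V x) \<partial>\<mu>) * (\<beta> r)^3 * (4 + L * s') * b\<^sup>2"
    using absorbed_constant_le[OF \<open>1 \<le> \<beta> r\<close> \<open>1 \<le> k\<close> _ less_imp_le[OF D]]
      integral_exp_minus_V_square_le unfolding k_def by simp
  finally show ?thesis unfolding a_def b_def L_def by (simp add: mult_ac)
qed

lemma super_poincare_weighted:
  assumes "0 < s" and f: "f \<in> form_dom \<mu> q \<mu>V"
  shows "(\<integral> x. (f x)\<^sup>2 \<partial>\<mu>V) \<le> s * form_val \<mu> q \<mu>V f
    + Inf {16 * (\<integral> x. exp (- 2 * V x) \<partial>\<mu>) * (\<beta> r)^3 * (4 + jump_lambda \<mu> q * \<kappa>1\<^sup>2 * s') | s' r.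
        0 < s' \<and> s' \<le> s \<and> 0 < r \<and> r \<le> s' * exp (- \<kappa>1) / (4 + jump_lambda \<mu> q * \<kappa>1\<^sup>2 * s')}
      * (\<integral> x. \<bar>f x\<bar> \<partial>\<mu>V)\<^sup>2"
proof (rule le_add_Inf_mult)
  have "s * exp (- \<kappa>1) / (4 + jump_lambda \<mu> q * \<kappa>1\<^sup>2 * s) > 0"
    using \<open>0 < s\<close> jump_lambda_nonneg by (simp add: add_pos_nonneg)
  then show "{16 * (\<integral> x. exp (- 2 * V x) \<partial>\<mu>) * (\<beta> r)^3 * (4 + jump_lambda \<mu> q * \<kappa>1\<^sup>2 * s') | s' r.
      0 < s' \<and> s' \<le> s \<and> 0 < r \<and> r \<le> s' * exp (- \<kappa>1) / (4 + jump_lambda \<mu> q * \<kappa>1\<^sup>2 * s')} \<noteq> {}"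
    using \<open>0 < s\<close> by blast
next
  fix B assume "B \<in> {16 * (\<integral> x. exp (- 2 * V x) \<partial>\<mu>) * (\<beta> r)^3 * (4 + jump_lambda \<mu> q * \<kappa>1\<^sup>2 * s') | s' r.
      0 < s' \<and> s' \<le> s \<and> 0 < r \<and> r \<le> s' * exp (- \<kappa>1) / (4 + jump_lambda \<mu> q * \<kappa>1\<^sup>2 * s')}"
  then obtain s' r where B: "B = 16 * (\<integral> x. exp (- 2 * V x) \<partial>\<mu>) * (\<beta> r)^3 * (4 + jump_lambda \<mu> q * \<kappa>1\<^sup>2 * s')"
    and r: "0 < s'" "s' \<le> s" "0 < r" "r \<le> s' * exp (- \<kappa>1) / (4 + jump_lambda \<mu> q * \<kappa>1\<^sup>2 * s')"
    by blast
  show "(\<integral> x. (f x)\<^sup>2 \<partial>\<mu>V) \<le> s * form_val \<mu> q \<mu>V f + B * (\<integral> x. \<bar>f x\<bar> \<partial>\<mu>V)\<^sup>2"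
    unfolding B by (rule form_dom_inequality[OF prob_space_\<mu>V sets_\<mu>V super_poincare_weighted_algA[OF _ r] f])
qed simp

end

theorem theorem2p9:
  fixes \<mu> :: "'a::polish_space measure"
    and q :: "'a \<Rightarrow> 'a \<Rightarrow> real"
    and x0 :: 'a
    and V :: "'a \<Rightarrow> real"
    and \<beta> :: "real \<Rightarrow> real"
    and \<kappa>1 :: real
  assumes sets_mu: "sets \<mu> = sets borel"
    and prob: "prob_space \<mu>"
    and q_meas: "(\<lambda>(x, y). q x y) \<in> borel_measurable (borel \<Otimes>\<^sub>M borel)"
    and q_nonneg: "\<And>x y. q x y \<ge> 0"
    and q_diag: "\<And>x. q x x = 0"
    and lambda_fin: "\<exists>C::real. \<forall>x. (\<integral>\<^sup>+ y. ennreal (min 1 ((dist x y)\<^sup>2) * q x y) \<partial>\<mu>) \<le> ennreal C"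
    and A_dense: "\<And>f \<epsilon>. f \<in> borel_measurable \<mu> \<Longrightarrow> integrable \<mu> (\<lambda>x. (f x)\<^sup>2) \<Longrightarrow> \<epsilon> > 0 \<Longrightarrow>
                     \<exists>g\<in>algA \<mu> q. (\<integral> x. (f x - g x)\<^sup>2 \<partial>\<mu>) < \<epsilon>"
    and V_meas: "V \<in> borel_measurable borel"
    and V_loc_bdd: "\<And>r. r > 0 \<Longrightarrow> \<exists>C. \<forall>x. dist x0 x \<le> r \<longrightarrow> \<bar>V x\<bar> \<le> C"
    and V_norm: "integrable \<mu> (\<lambda>x. exp (V x))" "(\<integral> x. exp (V x) \<partial>\<mu>) = 1"
    and beta_pos: "\<And>r. r > 0 \<Longrightarrow> \<beta> r > 0"
    and beta_decr: "\<And>r r'. 0 < r \<Longrightarrow> r \<le> r' \<Longrightarrow> \<beta> r' \<le> \<beta> r"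
    and SPI: "\<And>r f. r > 0 \<Longrightarrow> f \<in> form_dom \<mu> q \<mu> \<Longrightarrow>
               (\<integral> x. (f x)\<^sup>2 \<partial>\<mu>) \<le> r * form_val \<mu> q \<mu> f + \<beta> r * (\<integral> x. \<bar>f x\<bar> \<partial>\<mu>)\<^sup>2"
    and kappa1_pos: "\<kappa>1 > 0"
    and kappa2_fin: "integrable \<mu> (\<lambda>x. exp (- 2 * V x))"
    and V_lip: "\<And>x y. q x y > 0 \<Longrightarrow> \<bar>V x - V y\<bar> \<le> \<kappa>1 * min 1 (dist x y)"
  shows "\<forall>s>0. \<forall>f\<in>form_dom \<mu> q (density \<mu> (\<lambda>x. ennreal (exp (V x)))).
           (\<integral> x. (f x)\<^sup>2 \<partial>density \<mu> (\<lambda>x. ennreal (exp (V x))))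
             \<le> s * form_val \<mu> q (density \<mu> (\<lambda>x. ennreal (exp (V x)))) f
               + (Inf {16 * (\<integral> x. exp (- 2 * V x) \<partial>\<mu>) * (\<beta> r)^3
                          * (4 + jump_lambda \<mu> q * \<kappa>1\<^sup>2 * s') | s' r.
                        0 < s' \<and> s' \<le> s \<and> 0 < r \<and>
                        r \<le> s' * exp (- \<kappa>1) / (4 + jump_lambda \<mu> q * \<kappa>1\<^sup>2 * s')})
                 * (\<integral> x. \<bar>f x\<bar> \<partial>density \<mu> (\<lambda>x. ennreal (exp (V x))))\<^sup>2"
proof -
  interpret weighted_jump_form \<mu> q V \<beta> \<kappa>1
    by (intro weighted_jump_form.intro jump_form.intro weighted_jump_form_axioms.intro) (fact assms)+
  show ?thesis using super_poincare_weighted by blast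
qed

end
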